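(* Let $\mathcal{M}_X$ be a circular orientable embedding of a connected graph $X$. Let $Y$ be a connected voltage graph of $X$, and let $\mathcal{M}_Y$ be the associated voltage embedding. Let $\rho$ be the partition of the arcs of $Y$ whose classes are the preimages of the arcs of $X$, and let $\widehat L$ be its normalized characteristic matrix. If $U_X$ and $U_Y$ are the vertex-face transition matrices of $\mathcal{M}_X$ and $\mathcal{M}_Y$, then \[U_X=\widehat L^TU_Y\widehat L.\] Consequently, the $H$-digraph of $\mathcal{M}_X$ is a quotient digraph of the $H$-digraph of $\mathcal{M}_Y$.
   Context: Setting. A circular embedding is a cellular embedding in which every face is bounded by a cycle. Arcs are ordered pairs $(u,v)$ with $\{u,v\}$ an edge, and $u$ is the tail. Vertex-face transition matrix. Fix a consistent orientation of the faces, so that each edge shared by two faces receives opposite directions in them; then every arc lies in exactly one facial walk. Let $M$ be the arc-face incidence matrix and $N$ the arc-tail incidence matrix ($N_{(a,b),u}=1$ iff $a=u$). Let $\widehat M,\widehat N$ be these matrices with columns scaled to unit length. The transition matrix is $U=(2\widehat M\widehat M^T-I)(2\widehat N\widehat N^T-I)$. Voltage graph. Let $\Gamma$ be a group of order $r$ and $\phi$ a map from the arcs of $X$ to $\Gamma$ with $\phi(v,u)=\phi(u,v)^{-1}$. The voltage graph $Y=X^\phi$ has vertex set $V(X)\times\Gamma$, with $(u,g)$ adjacent to $(v,g\phi(u,v))$ for each arc $(u,v)$ of $X$. The covering map $\psi(u,g)=u$ is a homomorphism that is a bijection on neighbourhoods. Voltage embedding. The voltage embedding $\mathcal{M}_Y$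 is the orientable embedding of $Y$ whose facial walks are the closed walks into which the preimages under $\psi$ of the (oriented) facial walks of $\mathcal{M}_X$ decompose. Normalized characteristic matrix. The characteristic matrix of a partition has a column for each class, equal to the indicator vector of that class; normalizing scales each column to unit length. $H$-digraph. The principal Hamiltonian of a unitary $V$ with spectral decomposition $\sum\alpha_rF_r$ is $-i\sum\log(\alpha_r)F_r$, with $-\pi<-i\log\alpha_r\le\pi$. The $H$-digraph of an embedding is the weighted digraph on the arcs whose weighted adjacency matrix is the principal Hamiltonian of $U^2$. Quotient digraph. The quotient digraph of a weighted digraph with weighted adjacency matrix $H$, with respect to a partition with normalized characteristic matrix $\widehat L$, is the weighted digraph on the classes with weighted adjacency matrix $\widehat L^TH\widehat L$. *)

theory Defs
  imports "HOL-Analysis.Analysis" "HOL-Algebra.Group"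
begin

text \<open>A matrix with rows indexed by I and columns by J is a function
 'i => 'j => complex; products are restricted to the given index sets
 (entries outside the index sets are 0).\<close>

definition mmult :: "'i set \<Rightarrow> 'k set \<Rightarrow> 'j set \<Rightarrow> ('i \<Rightarrow> 'k \<Rightarrow> complex)
    \<Rightarrow> ('k \<Rightarrow> 'j \<Rightarrow> complex) \<Rightarrow> 'i \<Rightarrow> 'j \<Rightarrow> complex" where
  "mmult I K J A B = (\<lambda>i j. if i \<in> I \<and> j \<in> J then (\<Sum>k\<in>K. A i k * B k j) else 0)"

definition mtrans :: "('i \<Rightarrow> 'j \<Rightarrow> complex) \<Rightarrow> 'j \<Rightarrow> 'i \<Rightarrow> complex" where
  "mtrans A = (\<lambda>j i. A i j)"

definition idm :: "'i set \<Rightarrow> 'i \<Rightarrow> 'i \<Rightarrow> complex" where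
  "idm I = (\<lambda>i j. if i \<in> I \<and> j \<in> I \<and> i = j then 1 else 0)"

definition mat_eq_on :: "'i set \<Rightarrow> 'j set \<Rightarrow> ('i \<Rightarrow> 'j \<Rightarrow> complex) \<Rightarrow> ('i \<Rightarrow> 'j \<Rightarrow> complex) \<Rightarrow> bool" where
  "mat_eq_on I J A B \<longleftrightarrow> (\<forall>i\<in>I. \<forall>j\<in>J. A i j = B i j)"

definition simple_graph :: "'v set \<Rightarrow> ('v \<Rightarrow> 'v \<Rightarrow> bool) \<Rightarrow> bool" where
  "simple_graph V E \<longleftrightarrow> finite V \<and>
     (\<forall>u v. E u v \<longrightarrow> u \<in> V \<and> v \<in> V \<and> E v u \<and> u \<noteq> v)"

definition connected_graph :: "'v set \<Rightarrow> ('v \<Rightarrow> 'v \<Rightarrow> bool) \<Rightarrow> bool" where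
  "connected_graph V E \<longleftrightarrow>
     (\<forall>u\<in>V. \<forall>v\<in>V. (u, v) \<in> {(x, y). x \<in> V \<and> y \<in> V \<and> E x y}\<^sup>*)"

text \<open>Arcs: ordered pairs (u,v) with {u,v} an edge; the tail is fst.\<close>
definition arcs :: "'v set \<Rightarrow> ('v \<Rightarrow> 'v \<Rightarrow> bool) \<Rightarrow> ('v \<times> 'v) set" where
  "arcs V E = {(u, v). u \<in> V \<and> v \<in> V \<and> E u v}"

text \<open>An oriented (orientable) cellular embedding is encoded by the permutation
 sigma of the arcs sending each arc to the next arc of the (consistently oriented)
 facial walk containing it. The rotation at v (u |-> head of sigma(u,v)) must be
 a cyclic permutation of the neighbourhood of v (rotation system).\<close>
definition orientable_embedding ::
  "'v set \<Rightarrow> ('v \<Rightarrow> 'v \<Rightarrow> bool) \<Rightarrow> ('v \<times> 'v \<Rightarrow> 'v \<times> 'v) \<Rightarrow> bool" where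
  "orientable_embedding V E \<sigma> \<longleftrightarrow>
     bij_betw \<sigma> (arcs V E) (arcs V E) \<and>
     (\<forall>a\<in>arcs V E. fst (\<sigma> a) = snd a) \<and>
     (\<forall>v\<in>V. \<forall>u w. E v u \<and> E v w \<longrightarrow>
        (\<exists>n. ((\<lambda>x. snd (\<sigma> (x, v))) ^^ n) u = w))"

definition facial_orbit :: "('a \<Rightarrow> 'a) \<Rightarrow> 'a \<Rightarrow> 'a set" where
  "facial_orbit \<sigma> a = {(\<sigma> ^^ n) a | n. True}"

definition faces :: "'v set \<Rightarrow> ('v \<Rightarrow> 'v \<Rightarrow> bool) \<Rightarrow> ('v \<times> 'v \<Rightarrow> 'v \<times> 'v) \<Rightarrow> ('v \<times> 'v) set set" where
  "faces V E \<sigma> = facial_orbit \<sigma> ` arcs V E"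

text \<open>Circular: every facial walk is a cycle (length >= 3, no repeated vertex).\<close>
definition circular_embedding ::
  "'v set \<Rightarrow> ('v \<Rightarrow> 'v \<Rightarrow> bool) \<Rightarrow> ('v \<times> 'v \<Rightarrow> 'v \<times> 'v) \<Rightarrow> bool" where
  "circular_embedding V E \<sigma> \<longleftrightarrow> orientable_embedding V E \<sigma> \<and>
     (\<forall>F\<in>faces V E \<sigma>. 3 \<le> card F \<and> inj_on fst F)"

definition Mhat :: "'v set \<Rightarrow> ('v \<Rightarrow> 'v \<Rightarrow> bool) \<Rightarrow> ('v \<times> 'v \<Rightarrow> 'v \<times> 'v)
    \<Rightarrow> 'v \<times> 'v \<Rightarrow> ('v \<times> 'v) set \<Rightarrow> complex" where
  "Mhat V E \<sigma> = (\<lambda>a F. if a \<in> arcs V E \<and> F \<in> faces V E \<sigma> \<and> a \<in> F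
        then complex_of_real (1 / sqrt (real (card {b \<in> arcs V E. b \<in> F}))) else 0)"

definition Nhat :: "'v set \<Rightarrow> ('v \<Rightarrow> 'v \<Rightarrow> bool) \<Rightarrow> 'v \<times> 'v \<Rightarrow> 'v \<Rightarrow> complex" where
  "Nhat V E = (\<lambda>a u. if a \<in> arcs V E \<and> u \<in> V \<and> fst a = u
        then complex_of_real (1 / sqrt (real (card {b \<in> arcs V E. fst b = u}))) else 0)"

definition transition_matrix :: "'v set \<Rightarrow> ('v \<Rightarrow> 'v \<Rightarrow> bool) \<Rightarrow> ('v \<times> 'v \<Rightarrow> 'v \<times> 'v)
    \<Rightarrow> 'v \<times> 'v \<Rightarrow> 'v \<times> 'v \<Rightarrow> complex" where
  "transition_matrix V E \<sigma> =
     (let A = arcs V E; Fs = faces V E \<sigma>;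
          P = mmult A Fs A (Mhat V E \<sigma>) (mtrans (Mhat V E \<sigma>));
          Q = mmult A V A (Nhat V E) (mtrans (Nhat V E))
      in mmult A A A (\<lambda>i j. 2 * P i j - idm A i j) (\<lambda>i j. 2 * Q i j - idm A i j))"

definition spectral_decomposition :: "'i set \<Rightarrow> ('i \<Rightarrow> 'i \<Rightarrow> complex) \<Rightarrow> complex set
    \<Rightarrow> (complex \<Rightarrow> 'i \<Rightarrow> 'i \<Rightarrow> complex) \<Rightarrow> bool" where
  "spectral_decomposition I W S F \<longleftrightarrow> finite S \<and>
     (\<forall>\<alpha>\<in>S. (\<exists>i\<in>I. \<exists>j\<in>I. F \<alpha> i j \<noteq> 0) \<and>
             (\<forall>i\<in>I. \<forall>j\<in>I. F \<alpha> i j = cnj (F \<alpha> j i)) \<and>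
             mat_eq_on I I (mmult I I I (F \<alpha>) (F \<alpha>)) (F \<alpha>)) \<and>
     (\<forall>\<alpha>\<in>S. \<forall>\<beta>\<in>S. \<alpha> \<noteq> \<beta> \<longrightarrow> mat_eq_on I I (mmult I I I (F \<alpha>) (F \<beta>)) (\<lambda>_ _. 0)) \<and>
     mat_eq_on I I (\<lambda>i j. \<Sum>\<alpha>\<in>S. F \<alpha> i j) (idm I) \<and>
     mat_eq_on I I W (\<lambda>i j. \<Sum>\<alpha>\<in>S. \<alpha> * F \<alpha> i j)"

text \<open>Principal Hamiltonian: -i * sum log(alpha) F alpha with the principal branch
 (Ln has imaginary part in (-pi, pi], so -pi < -i log alpha <= pi for |alpha| = 1).\<close>
definition principal_hamiltonian :: "'i set \<Rightarrow> ('i \<Rightarrow> 'i \<Rightarrow> complex) \<Rightarrow> 'i \<Rightarrow> 'i \<Rightarrow> complex" where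
  "principal_hamiltonian I W = (THE H. \<exists>S F. spectral_decomposition I W S F \<and>
      H = (\<lambda>i j. if i \<in> I \<and> j \<in> I then (\<Sum>\<alpha>\<in>S. (- \<i> * Ln \<alpha>) * F \<alpha> i j) else 0))"

definition H_digraph :: "'v set \<Rightarrow> ('v \<Rightarrow> 'v \<Rightarrow> bool) \<Rightarrow> ('v \<times> 'v \<Rightarrow> 'v \<times> 'v)
    \<Rightarrow> 'v \<times> 'v \<Rightarrow> 'v \<times> 'v \<Rightarrow> complex" where
  "H_digraph V E \<sigma> = (let A = arcs V E; U = transition_matrix V E \<sigma>
      in principal_hamiltonian A (mmult A A A U U))"

definition norm_char_matrix :: "'a set \<Rightarrow> 'c set \<Rightarrow> ('c \<Rightarrow> 'a set) \<Rightarrow> 'a \<Rightarrow> 'c \<Rightarrow> complex" where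
  "norm_char_matrix A C cls = (\<lambda>a c. if a \<in> A \<and> c \<in> C \<and> a \<in> cls c
       then complex_of_real (1 / sqrt (real (card (cls c)))) else 0)"

definition quotient_digraph :: "'a set \<Rightarrow> 'c set \<Rightarrow> ('a \<Rightarrow> 'a \<Rightarrow> complex)
    \<Rightarrow> ('a \<Rightarrow> 'c \<Rightarrow> complex) \<Rightarrow> 'c \<Rightarrow> 'c \<Rightarrow> complex" where
  "quotient_digraph A C H L = mmult C A C (mtrans L) (mmult A A C H L)"

definition voltage_assignment :: "('g, 'b) monoid_scheme \<Rightarrow> 'v set \<Rightarrow> ('v \<Rightarrow> 'v \<Rightarrow> bool)
    \<Rightarrow> ('v \<times> 'v \<Rightarrow> 'g) \<Rightarrow> bool" where
  "voltage_assignment G V E \<phi> \<longleftrightarrow>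
     (\<forall>a\<in>arcs V E. \<phi> a \<in> carrier G \<and> \<phi> (snd a, fst a) = inv\<^bsub>G\<^esub> (\<phi> a))"

definition voltage_vertices :: "('g, 'b) monoid_scheme \<Rightarrow> 'v set \<Rightarrow> ('v \<times> 'g) set" where
  "voltage_vertices G V = V \<times> carrier G"

definition voltage_edges :: "('g, 'b) monoid_scheme \<Rightarrow> ('v \<Rightarrow> 'v \<Rightarrow> bool) \<Rightarrow> ('v \<times> 'v \<Rightarrow> 'g)
    \<Rightarrow> 'v \<times> 'g \<Rightarrow> 'v \<times> 'g \<Rightarrow> bool" where
  "voltage_edges G E \<phi> = (\<lambda>(u, g) (v, h). E u v \<and> g \<in> carrier G \<and> h = g \<otimes>\<^bsub>G\<^esub> \<phi> (u, v))"

definition cover_arc :: "('v \<times> 'g) \<times> ('v \<times> 'g) \<Rightarrow> 'v \<times> 'v" where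
  "cover_arc b = (fst (fst b), fst (snd b))"

text \<open>The arc
 ((u,g),(v,h)) lies over (u,v); the next arc of the facial walk of X is
 (v,w) = sigma(u,v), whose unique lift starting at (v,h) is ((v,h),(w, h * phi(v,w))).
 Orbits of this map are exactly the closed walks into which the preimages of the
 facial walks of X decompose.\<close>
definition voltage_embedding :: "('g, 'b) monoid_scheme \<Rightarrow> ('v \<times> 'v \<Rightarrow> 'g) \<Rightarrow> ('v \<times> 'v \<Rightarrow> 'v \<times> 'v)
    \<Rightarrow> ('v \<times> 'g) \<times> ('v \<times> 'g) \<Rightarrow> ('v \<times> 'g) \<times> ('v \<times> 'g)" where
  "voltage_embedding G \<phi> \<sigma> = (\<lambda>((u, g), (v, h)).
     let w = snd (\<sigma> (u, v)) in ((v, h), (w, h \<otimes>\<^bsub>G\<^esub> \<phi> (v, w))))"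

end

theory Submission
  imports Defs "HOL-Computational_Algebra.Fundamental_Theorem_Algebra"
begin

(* Both transition matrices are products of two reflections 2P - I, where P is the orthogonal
   projection onto the vectors that are constant on faces, respectively on arcs with a common
   tail. The covering map sends lifted facial walks onto facial walks and is a bijection between
   tail classes, so summing a row of P_Y over a fibre gives the corresponding entry of P_X; in
   matrix form P_Y L = L P_X. This intertwining passes to reflections and products, so
   U_Y L = L U_X, and L^T L = I gives U_X = L^T U_Y L.

   The spectral projections of the unitary matrix U^2 are Lagrange interpolation polynomials in
   U^2. Every polynomial annihilating U_Y^2 also annihilates U_X^2, so one set of nodes serves
   both, the two principal Hamiltonians are the same polynomial expression, and they intertwine
   with L as well. *)

section \<open>Matrices and vectors on finite index sets\<close>

lemma mmult_apply: "i \<in> I \<Longrightarrow> j \<in> J \<Longrightarrow> mmult I K J A B i j = (\<Sum>k\<in>K. A i k * B k j)"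
  by (simp add: mmult_def)

lemma mmult_outside: "i \<notin> I \<or> j \<notin> J \<Longrightarrow> mmult I K J A B i j = 0"
  by (auto simp: mmult_def)

lemma mmult_assoc:
  "mmult I K J (mmult I L K A B) C = mmult I L J A (mmult L K J B C)"
proof (intro ext)
  fix i j
  show "mmult I K J (mmult I L K A B) C i j = mmult I L J A (mmult L K J B C) i j"
  proof (cases "i \<in> I \<and> j \<in> J")
    case True
    have "(\<Sum>k\<in>K. mmult I L K A B i k * C k j) = (\<Sum>k\<in>K. (\<Sum>l\<in>L. A i l * B l k) * C k j)"
      by (rule sum.cong) (use True in \<open>auto simp: mmult_def\<close>)
    also have "\<dots> = (\<Sum>l\<in>L. A i l * (\<Sum>k\<in>K. B l k * C k j))"
      by (simp add: sum_distrib_left sum_distrib_right mult.assoc sum.swap[of _ K L])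
    also have "\<dots> = (\<Sum>l\<in>L. A i l * mmult L K J B C l j)"
      by (rule sum.cong) (use True in \<open>auto simp: mmult_def\<close>)
    finally show ?thesis using True by (simp add: mmult_def)
  qed (auto simp: mmult_def)
qed

lemma mmult_cong:
  assumes "mat_eq_on I K A A'" "mat_eq_on K J B B'"
  shows "mmult I K J A B = mmult I K J A' B'"
  using assms by (auto simp: mmult_def mat_eq_on_def intro!: ext sum.cong)

lemma sum_idm_right: "finite A \<Longrightarrow> j \<in> A \<Longrightarrow> (\<Sum>k\<in>A. f k * idm A k j) = f j"
  by (simp add: idm_def if_distrib[of "\<lambda>x. _ * x"] sum.delta' cong: if_cong)

lemma sum_idm_left: "finite A \<Longrightarrow> i \<in> A \<Longrightarrow> (\<Sum>k\<in>A. idm A i k * f k) = f i"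
  by (simp add: idm_def if_distrib[of "\<lambda>x. x * _"] sum.delta cong: if_cong)

lemma mmult_idm_left: "finite I \<Longrightarrow> i \<in> I \<Longrightarrow> j \<in> J \<Longrightarrow> mmult I I J (idm I) B i j = B i j"
  by (simp add: mmult_apply sum_idm_left)

lemma mmult_idm_right: "finite J \<Longrightarrow> i \<in> I \<Longrightarrow> j \<in> J \<Longrightarrow> mmult I J J A (idm J) i j = A i j"
  by (simp add: mmult_apply sum_idm_right)

lemma mmult_idm_left_eq:
  assumes "finite A" "\<And>i j. i \<notin> A \<or> j \<notin> A \<Longrightarrow> M i j = 0"
  shows "mmult A A A (idm A) M = M"
  using assms mmult_idm_left[of A] mmult_outside[of _ A _ A A "idm A" M] by (metis ext)

lemma mmult_sum_left:
  "i \<in> I \<Longrightarrow> j \<in> J \<Longrightarrow> mmult I K J (\<lambda>i k. \<Sum>b\<in>B. f b i k) C i j = (\<Sum>b\<in>B. mmult I K J (f b) C i j)"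
  by (simp add: mmult_def sum_distrib_right sum.swap[of _ K B])

lemma mmult_sum_right:
  "i \<in> I \<Longrightarrow> j \<in> J \<Longrightarrow> mmult I K J C (\<lambda>k j. \<Sum>b\<in>B. f b k j) i j = (\<Sum>b\<in>B. mmult I K J C (f b) i j)"
  by (simp add: mmult_def sum_distrib_left sum.swap[of _ K B])

lemma mmult_scale_left: "mmult I K J (\<lambda>i k. c * A i k) B i j = c * mmult I K J A B i j"
  by (simp add: mmult_def sum_distrib_left mult.assoc)

lemma mmult_scale_right: "mmult I K J A (\<lambda>k j. c * B k j) i j = c * mmult I K J A B i j"
  by (simp add: mmult_def sum_distrib_left ac_simps)

definition mvec :: "'i set \<Rightarrow> 'j set \<Rightarrow> ('i \<Rightarrow> 'j \<Rightarrow> complex) \<Rightarrow> ('j \<Rightarrow> complex) \<Rightarrow> 'i \<Rightarrow> complex" where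
  "mvec I J M v = (\<lambda>i. if i \<in> I then \<Sum>j\<in>J. M i j * v j else 0)"

definition vanishes_outside :: "'i set \<Rightarrow> ('i \<Rightarrow> complex) \<Rightarrow> bool" where
  "vanishes_outside I v \<longleftrightarrow> (\<forall>i. i \<notin> I \<longrightarrow> v i = 0)"

definition unit_vec :: "'i \<Rightarrow> 'i \<Rightarrow> complex" where
  "unit_vec j = (\<lambda>k. if k = j then 1 else 0)"

lemma vanishes_outside_mvec [simp]: "vanishes_outside I (mvec I J M v)"
  by (simp add: vanishes_outside_def mvec_def)

lemma vanishes_outside_unit_vec: "j \<in> I \<Longrightarrow> vanishes_outside I (unit_vec j)"
  by (auto simp: vanishes_outside_def unit_vec_def)

lemma mvec_add: "mvec I J M (\<lambda>j. x j + y j) = (\<lambda>i. mvec I J M x i + mvec I J M y i)"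
  by (auto simp: mvec_def distrib_left sum.distrib)

lemma mvec_scale: "mvec I J M (\<lambda>j. c * x j) = (\<lambda>i. c * mvec I J M x i)"
  by (auto simp: mvec_def sum_distrib_left ac_simps)

lemma mvec_lincomb: "mvec I J M (\<lambda>j. \<Sum>k\<in>K. c k * f k j) = (\<lambda>i. \<Sum>k\<in>K. c k * mvec I J M (f k) i)"
  by (auto simp: mvec_def sum_distrib_left sum.swap[of _ J K] ac_simps)

lemma mvec_zero [simp]: "mvec I J M (\<lambda>j. 0) = (\<lambda>i. 0)"
  by (auto simp: mvec_def)

lemma mvec_mmult: "mvec I J (mmult I K J A B) v = mvec I K A (mvec K J B v)"
proof (intro ext)
  fix i
  show "mvec I J (mmult I K J A B) v i = mvec I K A (mvec K J B v) i"
  proof (cases "i \<in> I")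
    case True
    have "(\<Sum>j\<in>J. mmult I K J A B i j * v j) = (\<Sum>j\<in>J. (\<Sum>k\<in>K. A i k * B k j) * v j)"
      by (rule sum.cong) (use True in \<open>auto simp: mmult_def\<close>)
    also have "\<dots> = (\<Sum>k\<in>K. A i k * (\<Sum>j\<in>J. B k j * v j))"
      by (simp add: sum_distrib_left sum_distrib_right mult.assoc sum.swap[of _ K J])
    also have "\<dots> = (\<Sum>k\<in>K. A i k * mvec K J B v k)"
      by (rule sum.cong) (auto simp: mvec_def)
    finally show ?thesis using True by (simp add: mvec_def)
  qed (simp add: mvec_def)
qed

lemma mmult_eq_mvec_column: "j \<in> J \<Longrightarrow> mmult I K J A B i j = mvec I K A (\<lambda>k. B k j) i"
  by (simp add: mmult_def mvec_def)

lemma mvec_unit_vec: "finite J \<Longrightarrow> j \<in> J \<Longrightarrow> mvec I J M (unit_vec j) i = (if i \<in> I then M i j else 0)"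
  by (simp add: mvec_def unit_vec_def if_distrib[of "\<lambda>x. _ * x"] sum.delta' cong: if_cong)

lemma vector_eq_sum_unit_vec:
  "finite I \<Longrightarrow> vanishes_outside I v \<Longrightarrow> v = (\<lambda>i. \<Sum>j\<in>I. v j * unit_vec j i)"
  by (auto simp: vanishes_outside_def unit_vec_def if_distrib[of "\<lambda>x. _ * x"] sum.delta'
      cong: if_cong intro!: ext)

lemma mvec_cong: "mat_eq_on I J M M' \<Longrightarrow> mvec I J M v = mvec I J M' v"
  by (auto simp: mvec_def mat_eq_on_def intro!: ext sum.cong)

lemma mvec_cong_vec: "(\<And>j. j \<in> J \<Longrightarrow> v j = v' j) \<Longrightarrow> mvec I J M v = mvec I J M v'"
  by (auto simp: mvec_def intro!: ext sum.cong)

lemma mvec_idm: "finite I \<Longrightarrow> vanishes_outside I v \<Longrightarrow> mvec I I (idm I) v = v"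
  by (auto simp: mvec_def vanishes_outside_def sum_idm_left intro!: ext)

lemma mvec_left_inverse:
  assumes "finite J" "mat_eq_on J J (mmult J I J B A) (idm J)" "vanishes_outside J v"
  shows "mvec J I B (mvec I J A v) = v"
  using assms by (metis mvec_mmult mvec_cong mvec_idm)

lemma nontrivial_relation_eliminate:
  fixes v :: "'k \<Rightarrow> 'i \<Rightarrow> complex"
  assumes K: "finite K" "j \<in> K" "v j i \<noteq> 0"
    and c: "\<exists>k\<in>K - {j}. c k \<noteq> 0"
      "\<forall>t\<in>I. (\<Sum>k\<in>K - {j}. c k * (v k t - v k i / v j i * v j t)) = 0"
  shows "\<exists>d. (\<exists>k\<in>K. d k \<noteq> 0) \<and> (\<forall>t\<in>insert i I. (\<Sum>k\<in>K. d k * v k t) = 0)"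
proof -
  define d where "d = c(j := - (\<Sum>k\<in>K - {j}. c k * v k i) / v j i)"
  have eliminated: "(\<Sum>k\<in>K. d k * v k t) = (\<Sum>k\<in>K - {j}. c k * (v k t - v k i / v j i * v j t))"
    for t
  proof -
    have "(\<Sum>k\<in>K - {j}. d k * v k t) = (\<Sum>k\<in>K - {j}. c k * v k t)"
      by (intro sum.cong) (auto simp: d_def)
    then have "(\<Sum>k\<in>K. d k * v k t) = d j * v j t + (\<Sum>k\<in>K - {j}. c k * v k t)"
      using K by (simp add: sum.remove[of K j])
    also have "\<dots> = (\<Sum>k\<in>K - {j}. c k * v k t) - (\<Sum>k\<in>K - {j}. c k * v k i) / v j i * v j t"
      by (simp add: d_def algebra_simps)
    also have "\<dots> = (\<Sum>k\<in>K - {j}. c k * v k t - c k * v k i / v j i * v j t)"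
      by (simp add: sum_subtractf sum_distrib_right sum_divide_distrib)
    also have "\<dots> = (\<Sum>k\<in>K - {j}. c k * (v k t - v k i / v j i * v j t))"
      by (simp add: algebra_simps)
    finally show ?thesis .
  qed
  show ?thesis
  proof (intro exI[of _ d] conjI ballI)
    show "\<exists>k\<in>K. d k \<noteq> 0" using c(1) by (auto simp: d_def)
    show "(\<Sum>k\<in>K. d k * v k t) = 0" if "t \<in> insert i I" for t
      using that c(2) K(3) by (auto simp: eliminated)
  qed
qed

lemma exists_nontrivial_relation:
  assumes "finite I" "finite K" "card I < card K"
  shows "\<exists>c. (\<exists>k\<in>K. c k \<noteq> 0) \<and> (\<forall>i\<in>I. (\<Sum>k\<in>K. c k * v k i) = (0::complex))"
  using assms
proof (induction I arbitrary: K v rule: finite_induct)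
  case empty
  then have "K \<noteq> {}" by auto
  then show ?case by (intro exI[of _ "\<lambda>_. 1"]) auto
next
  case (insert i I)
  show ?case
  proof (cases "\<forall>k\<in>K. v k i = 0")
    case True
    have "card I < card K" using insert by simp
    then obtain c where "\<exists>k\<in>K. c k \<noteq> 0" "\<forall>t\<in>I. (\<Sum>k\<in>K. c k * v k t) = 0"
      using insert.IH[OF insert.prems(1)] by blast
    then show ?thesis using True by (intro exI[of _ c]) auto
  next
    case False
    then obtain j where j: "j \<in> K" "v j i \<noteq> 0" by auto
    have "card I < card (K - {j})" using insert j by simp
    then obtain c where "\<exists>k\<in>K - {j}. c k \<noteq> 0"
      "\<forall>t\<in>I. (\<Sum>k\<in>K - {j}. c k * (v k t - v k i / v j i * v j t)) = 0"
      using insert.IH[of "K - {j}" "\<lambda>k t. v k t - v k i / v j i * v j t"] insert.prems(1) by blast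
    then show ?thesis
      by (rule nontrivial_relation_eliminate[where v = v and i = i and j = j, OF insert.prems(1) j])
  qed
qed

section \<open>Polynomials acting on vectors\<close>

definition poly_act :: "'i set \<Rightarrow> ('i \<Rightarrow> 'i \<Rightarrow> complex) \<Rightarrow> complex poly \<Rightarrow> ('i \<Rightarrow> complex) \<Rightarrow> 'i \<Rightarrow> complex" where
  "poly_act I W p v = (\<lambda>i. \<Sum>k\<le>degree p. coeff p k * ((mvec I I W ^^ k) v) i)"

definition annihilates :: "'i set \<Rightarrow> ('i \<Rightarrow> 'i \<Rightarrow> complex) \<Rightarrow> complex poly \<Rightarrow> bool" where
  "annihilates I W p \<longleftrightarrow> (\<forall>v. vanishes_outside I v \<longrightarrow> poly_act I W p v = (\<lambda>i. 0))"

lemma funpow_mvec_lincomb: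
  "(mvec I I W ^^ n) (\<lambda>j. \<Sum>k\<in>K. c k * f k j) = (\<lambda>i. \<Sum>k\<in>K. c k * (mvec I I W ^^ n) (f k) i)"
  by (induction n) (simp_all add: mvec_lincomb)

lemma funpow_mvec_zero [simp]: "(mvec I I W ^^ n) (\<lambda>j. 0) = (\<lambda>i. 0)"
  by (induction n) simp_all

lemma poly_act_degree_bound:
  "degree p \<le> n \<Longrightarrow> poly_act I W p v = (\<lambda>i. \<Sum>k\<le>n. coeff p k * ((mvec I I W ^^ k) v) i)"
  unfolding poly_act_def by (intro ext sum.mono_neutral_left) (auto simp: coeff_eq_0)

lemma poly_act_add: "poly_act I W (p + q) v = (\<lambda>i. poly_act I W p v i + poly_act I W q v i)"
proof -
  let ?n = "max (degree p) (degree q)"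
  have "degree (p + q) \<le> ?n" by (rule degree_add_le) auto
  then show ?thesis
    by (simp add: poly_act_degree_bound[of _ ?n] poly_act_degree_bound[of p ?n]
        poly_act_degree_bound[of q ?n] distrib_right sum.distrib)
qed

lemma poly_act_smult: "poly_act I W (smult c p) v = (\<lambda>i. c * poly_act I W p v i)"
  by (simp add: poly_act_degree_bound[of _ "degree p"] poly_act_def sum_distrib_left mult.assoc)

lemma poly_act_zero_poly [simp]: "poly_act I W 0 v = (\<lambda>i. 0)"
  by (simp add: poly_act_def)

lemma poly_act_one [simp]: "poly_act I W 1 v = v"
  by (simp add: poly_act_def)

lemma poly_act_const: "poly_act I W [:c:] v = (\<lambda>i. c * v i)"
  by (simp add: poly_act_def)

lemma poly_act_lincomb:
  "poly_act I W p (\<lambda>j. \<Sum>k\<in>K. c k * f k j) = (\<lambda>i. \<Sum>k\<in>K. c k * poly_act I W p (f k) i)"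
  by (auto simp: poly_act_def funpow_mvec_lincomb sum_distrib_left sum.swap[of _ K] ac_simps intro!: ext)

lemma poly_act_zero_vec [simp]: "poly_act I W p (\<lambda>j. 0) = (\<lambda>i. 0)"
  by (simp add: poly_act_def)

lemma poly_act_pCons: "poly_act I W (pCons a p) v = (\<lambda>i. a * v i + mvec I I W (poly_act I W p v) i)"
proof -
  have d: "degree (pCons a p) \<le> Suc (degree p)" by (simp add: degree_pCons_le)
  have e: "mvec I I W (poly_act I W p v) = (\<lambda>i. \<Sum>k\<le>degree p. coeff p k * ((mvec I I W ^^ Suc k) v) i)"
    by (simp add: poly_act_def mvec_lincomb)
  show ?thesis
    unfolding poly_act_degree_bound[OF d] sum.atMost_Suc_shift e
    by (simp del: funpow.simps add: funpow_Suc_right[symmetric])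
qed

lemma poly_act_X: "poly_act I W [:0,1:] v = mvec I I W v"
  by (simp add: poly_act_pCons)

lemma poly_act_linear_factor: "poly_act I W [:-z,1:] v = (\<lambda>i. mvec I I W v i - z * v i)"
  by (simp add: poly_act_pCons poly_act_const)

lemma poly_act_mult: "poly_act I W (p * q) v = poly_act I W p (poly_act I W q v)"
proof (induction p)
  case 0
  then show ?case by simp
next
  case (pCons a p)
  have "poly_act I W (pCons a p * q) v = poly_act I W (smult a q + pCons 0 (p * q)) v"
    by simp
  also have "\<dots> = (\<lambda>i. a * poly_act I W q v i + mvec I I W (poly_act I W p (poly_act I W q v)) i)"
    by (simp add: poly_act_add poly_act_smult poly_act_pCons pCons.IH)
  also have "\<dots> = poly_act I W (pCons a p) (poly_act I W q v)"
    by (simp add: poly_act_pCons)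
  finally show ?case .
qed

lemma poly_act_mult_commute: "poly_act I W (p * q) v = poly_act I W q (poly_act I W p v)"
  by (simp add: poly_act_mult[symmetric] mult.commute)

lemma vanishes_outside_poly_act: "vanishes_outside I v \<Longrightarrow> vanishes_outside I (poly_act I W p v)"
  by (induction p) (simp_all add: poly_act_pCons vanishes_outside_def mvec_def)

lemma poly_act_diff: "poly_act I W (p - q) v = (\<lambda>i. poly_act I W p v i - poly_act I W q v i)"
  using poly_act_add[of I W "p - q" q v] by (auto intro!: ext dest: fun_cong simp: algebra_simps)

lemma poly_act_sum: "poly_act I W (\<Sum>k\<in>K. f k) v = (\<lambda>i. \<Sum>k\<in>K. poly_act I W (f k) v i)"
  by (induction K rule: infinite_finite_induct) (simp_all add: poly_act_add)

lemma annihilates_dvd: "annihilates I W q \<Longrightarrow> q dvd p \<Longrightarrow> annihilates I W p"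
  by (auto simp: annihilates_def poly_act_mult_commute vanishes_outside_poly_act elim!: dvdE)

lemma exists_annihilating_poly:
  assumes "finite I"
  shows "\<exists>p. p \<noteq> 0 \<and> annihilates I W p"
proof -
  let ?T = "mvec I I W"
  let ?n = "card I"
  have "\<exists>p. p \<noteq> 0 \<and> poly_act I W p (unit_vec j) = (\<lambda>i. 0)" if j: "j \<in> I" for j
  proof -
    have "card I < card {..?n}" by simp
    from exists_nontrivial_relation[OF assms _ this, of "\<lambda>k. (?T ^^ k) (unit_vec j)"] obtain c where
      c: "\<exists>k\<in>{..?n}. c k \<noteq> 0" "\<forall>i\<in>I. (\<Sum>k\<le>?n. c k * (?T ^^ k) (unit_vec j) i) = 0"
      by auto
    define p where "p = (\<Sum>k\<le>?n. monom (c k) k)"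
    have cp: "coeff p k = (if k \<le> ?n then c k else 0)" for k
      by (simp add: p_def coeff_sum coeff_monom)
    have pnz: "p \<noteq> 0" using c(1) cp by (metis atMost_iff coeff_0)
    have dp: "degree p \<le> ?n" by (rule degree_le) (simp add: cp)
    have outside: "(?T ^^ k) (unit_vec j) i = 0" if "i \<notin> I" for i k
      by (cases k) (use that j in \<open>auto simp: unit_vec_def mvec_def\<close>)
    have "poly_act I W p (unit_vec j) = (\<lambda>i. \<Sum>k\<le>?n. c k * (?T ^^ k) (unit_vec j) i)"
      by (simp add: poly_act_degree_bound[OF dp] cp)
    also have "\<dots> = (\<lambda>i. 0)"
      using c(2) outside by (metis (no_types, lifting) mult_zero_right sum.neutral)
    finally show ?thesis using pnz by blast
  qed
  then obtain pj where pj: "\<And>j. j \<in> I \<Longrightarrow> pj j \<noteq> 0 \<and> poly_act I W (pj j) (unit_vec j) = (\<lambda>i. 0)"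
    by metis
  define P where "P = (\<Prod>j\<in>I. pj j)"
  have Pnz: "P \<noteq> 0" using pj assms by (simp add: P_def)
  have P_unit_vec: "poly_act I W P (unit_vec j) = (\<lambda>i. 0)" if "j \<in> I" for j
  proof -
    have "P = (\<Prod>j\<in>I-{j}. pj j) * pj j" using that assms by (simp add: P_def prod.remove mult.commute)
    then show ?thesis using pj[OF that] by (simp add: poly_act_mult)
  qed
  have "poly_act I W P v = (\<lambda>i. 0)" if "vanishes_outside I v" for v
    using vector_eq_sum_unit_vec[OF assms that] poly_act_lincomb[of I W P v "\<lambda>j i. unit_vec j i" I]
      P_unit_vec by (metis (no_types, lifting) mult_zero_right sum.neutral)
  then show ?thesis using Pnz unfolding annihilates_def by blast
qed

definition inner_on :: "'i set \<Rightarrow> ('i \<Rightarrow> complex) \<Rightarrow> ('i \<Rightarrow> complex) \<Rightarrow> complex" where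
  "inner_on I x y = (\<Sum>i\<in>I. x i * cnj (y i))"

lemma inner_on_scale_left: "inner_on I (\<lambda>i. c * x i) y = c * inner_on I x y"
  by (simp add: inner_on_def sum_distrib_left mult.assoc)

lemma inner_on_scale_right: "inner_on I x (\<lambda>i. c * y i) = cnj c * inner_on I x y"
  by (simp add: inner_on_def sum_distrib_left ac_simps)

lemma inner_on_sum_left: "inner_on I (\<lambda>i. \<Sum>k\<in>K. f k i) y = (\<Sum>k\<in>K. inner_on I (f k) y)"
  by (simp add: inner_on_def sum_distrib_right sum.swap[of _ I K])

lemma inner_on_sum_right: "inner_on I x (\<lambda>i. \<Sum>k\<in>K. f k i) = (\<Sum>k\<in>K. inner_on I x (f k))"
  by (simp add: inner_on_def sum_distrib_left cnj_sum sum.swap[of _ I K])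

lemma inner_on_diff_right: "inner_on I x (\<lambda>i. y i - z i) = inner_on I x y - inner_on I x z"
  by (simp add: inner_on_def algebra_simps sum_subtractf)

lemma cnj_inner_on: "cnj (inner_on I x y) = inner_on I y x"
  by (simp add: inner_on_def cnj_sum mult.commute)

lemma inner_on_unit_vec: "finite I \<Longrightarrow> j \<in> I \<Longrightarrow> inner_on I x (unit_vec j) = x j"
  by (simp add: inner_on_def unit_vec_def if_distrib[of "\<lambda>x. _ * x"] if_distrib[of cnj] sum.delta'
      cong: if_cong)

lemma inner_on_self_eq_zero:
  assumes "finite I" "vanishes_outside I x" "inner_on I x x = 0"
  shows "x = (\<lambda>i. 0)"
proof -
  have "inner_on I x x = (\<Sum>i\<in>I. of_real ((cmod (x i))\<^sup>2))"
    unfolding inner_on_def by (intro sum.cong refl) (simp only: complex_norm_square)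
  then have "inner_on I x x = of_real (\<Sum>i\<in>I. (cmod (x i))\<^sup>2)" by simp
  then have "(\<Sum>i\<in>I. (cmod (x i))\<^sup>2) = 0" using assms(3) by (metis of_real_eq_0_iff)
  then have "\<forall>i\<in>I. (cmod (x i))\<^sup>2 = 0" using assms(1) by (subst (asm) sum_nonneg_eq_0_iff) auto
  then show ?thesis using assms(2) by (auto simp: vanishes_outside_def intro!: ext)
qed

section \<open>Unitary matrices\<close>

locale unitary =
  fixes I :: "'i set" and W W' :: "'i \<Rightarrow> 'i \<Rightarrow> complex"
  assumes finite_index: "finite I"
    and adjoint: "\<And>i j. i \<in> I \<Longrightarrow> j \<in> I \<Longrightarrow> W' i j = cnj (W j i)"
    and adjoint_left_inverse: "mat_eq_on I I (mmult I I I W' W) (idm I)"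
    and adjoint_right_inverse: "mat_eq_on I I (mmult I I I W W') (idm I)"
begin

lemma inner_on_mvec_adjoint: "inner_on I (mvec I I W x) y = inner_on I x (mvec I I W' y)"
proof -
  have "inner_on I (mvec I I W x) y = (\<Sum>i\<in>I. \<Sum>j\<in>I. W i j * x j * cnj (y i))"
    by (simp add: inner_on_def mvec_def sum_distrib_right)
  also have "\<dots> = (\<Sum>j\<in>I. \<Sum>i\<in>I. x j * cnj (W' j i * y i))"
    by (subst sum.swap) (auto intro!: sum.cong simp: adjoint)
  also have "\<dots> = inner_on I x (mvec I I W' y)"
    by (simp add: inner_on_def mvec_def sum_distrib_left cnj_sum)
  finally show ?thesis .
qed

lemma mvec_adjoint_mvec: "vanishes_outside I x \<Longrightarrow> mvec I I W' (mvec I I W x) = x"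
  by (rule mvec_left_inverse[OF finite_index adjoint_left_inverse])

lemma eigenvector_adjoint:
  assumes w: "vanishes_outside I w" and e: "mvec I I W w = (\<lambda>i. z * w i)"
  shows "mvec I I W' w = (\<lambda>i. cnj z * w i)"
proof (cases "w = (\<lambda>i. 0)")
  case True then show ?thesis by simp
next
  case False
  then have nz: "inner_on I w w \<noteq> 0" using inner_on_self_eq_zero[OF finite_index w] by blast
  have "inner_on I (mvec I I W w) (mvec I I W w) = inner_on I w w"
    by (simp add: inner_on_mvec_adjoint mvec_adjoint_mvec w)
  then have "z * cnj z * inner_on I w w = inner_on I w w"
    using e by (simp add: inner_on_scale_left inner_on_scale_right mult.assoc)
  then have zz: "cnj z * z = 1" using nz by (simp add: mult.commute)
  have "w = mvec I I W' (mvec I I W w)" by (simp add: mvec_adjoint_mvec w)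
  also have "\<dots> = (\<lambda>i. z * mvec I I W' w i)" using e by (simp add: mvec_scale)
  finally have "\<And>i. w i = z * mvec I I W' w i" by metis
  then have "\<And>i. cnj z * w i = mvec I I W' w i" using zz by (metis mult.assoc mult_1)
  then show ?thesis by auto
qed

text \<open>W - z is normal, so its kernel agrees with that of its square; this is what allows
  repeated linear factors of an annihilating polynomial to be dropped.\<close>

lemma linear_factor_kernel_of_square:
  assumes u: "vanishes_outside I u"
    and sq: "poly_act I W [:-z,1:] (poly_act I W [:-z,1:] u) = (\<lambda>i. 0)"
  shows "poly_act I W [:-z,1:] u = (\<lambda>i. 0)"
proof -
  define w where "w = poly_act I W [:-z,1:] u"
  have w_vanishes: "vanishes_outside I w" unfolding w_def by (rule vanishes_outside_poly_act[OF u])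
  have w_eq: "w = (\<lambda>i. mvec I I W u i - z * u i)" unfolding w_def by (rule poly_act_linear_factor)
  have "poly_act I W [:-z,1:] w = (\<lambda>i. 0)" using sq unfolding w_def .
  then have "mvec I I W w = (\<lambda>i. z * w i)"
    unfolding poly_act_linear_factor by (metis (no_types, lifting) eq_iff_diff_eq_0)
  then have W'w: "mvec I I W' w = (\<lambda>i. cnj z * w i)" by (rule eigenvector_adjoint[OF w_vanishes])
  have "inner_on I w (mvec I I W u) = cnj (inner_on I u (mvec I I W' w))"
    by (simp only: cnj_inner_on inner_on_mvec_adjoint[symmetric])
  also have "\<dots> = cnj z * inner_on I w u"
    by (simp only: W'w inner_on_scale_right cnj_inner_on complex_cnj_mult complex_cnj_cnj)
  finally have "inner_on I w w = 0"
    by (subst (2) w_eq) (simp add: inner_on_diff_right inner_on_scale_right)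
  then show ?thesis using inner_on_self_eq_zero[OF finite_index w_vanishes] by (simp add: w_def)
qed

lemma linear_factor_kernel_of_power:
  assumes "vanishes_outside I u" "poly_act I W ([:-z,1:] ^ Suc m) u = (\<lambda>i. 0)"
  shows "poly_act I W [:-z,1:] u = (\<lambda>i. 0)"
  using assms
proof (induction m arbitrary: u)
  case 0 then show ?case by simp
next
  case (Suc m)
  have "poly_act I W ([:-z,1:] ^ Suc m) (poly_act I W [:-z,1:] u) = (\<lambda>i. 0)"
    using Suc.prems(2) by (simp only: power_Suc2 poly_act_mult)
  then have "poly_act I W [:-z,1:] (poly_act I W [:-z,1:] u) = (\<lambda>i. 0)"
    by (rule Suc.IH[OF vanishes_outside_poly_act[OF Suc.prems(1)]])
  then show ?case by (rule linear_factor_kernel_of_square[OF Suc.prems(1)])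
qed

lemma annihilates_reduce_multiplicity:
  assumes "annihilates I W ([:-z,1:] ^ m * r)" "1 \<le> m"
  shows "annihilates I W ([:-z,1:] * r)"
  unfolding annihilates_def
proof (intro allI impI)
  fix v assume v: "vanishes_outside I v"
  obtain k where m: "m = Suc k" using assms(2) by (cases m) auto
  have "poly_act I W ([:-z,1:] ^ Suc k) (poly_act I W r v) = (\<lambda>i. 0)"
    using assms(1) v m by (simp add: annihilates_def poly_act_mult)
  then have "poly_act I W [:-z,1:] (poly_act I W r v) = (\<lambda>i. 0)"
    by (rule linear_factor_kernel_of_power[OF vanishes_outside_poly_act[OF v]])
  then show "poly_act I W ([:-z,1:] * r) v = (\<lambda>i. 0)" by (simp only: poly_act_mult)
qed

lemma annihilates_reduce_multiplicities:
  assumes "finite R" "\<forall>z\<in>R. 1 \<le> m z" "annihilates I W ((\<Prod>z\<in>R. [:-z,1:] ^ m z) * r)"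
  shows "annihilates I W ((\<Prod>z\<in>R. [:-z,1:]) * r)"
  using assms
proof (induction R arbitrary: r rule: finite_induct)
  case empty then show ?case by simp
next
  case (insert z R)
  have "annihilates I W ((\<Prod>z\<in>R. [:-z,1:] ^ m z) * ([:-z,1:] ^ m z * r))"
    using insert.prems(2) insert.hyps by (simp add: ac_simps)
  then have "annihilates I W ((\<Prod>z\<in>R. [:-z,1:]) * ([:-z,1:] ^ m z * r))"
    using insert.IH insert.prems(1) by simp
  then have "annihilates I W ([:-z,1:] ^ m z * ((\<Prod>z\<in>R. [:-z,1:]) * r))"
    by (simp add: ac_simps)
  then have "annihilates I W ([:-z,1:] * ((\<Prod>z\<in>R. [:-z,1:]) * r))"
    using annihilates_reduce_multiplicity insert.prems(1) by blast
  then show ?case using insert.hyps by (simp add: ac_simps)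
qed

lemma exists_annihilating_product_linear_factors:
  "\<exists>Z. finite Z \<and> annihilates I W (\<Prod>z\<in>Z. [:-z,1:])"
proof -
  obtain P where P: "P \<noteq> 0" "annihilates I W P"
    using exists_annihilating_poly[OF finite_index] by blast
  define R where "R = {z. poly P z = 0}"
  have fR: "finite R" using P(1) by (simp add: R_def poly_roots_finite)
  have dec: "smult (lead_coeff P) (\<Prod>z\<in>R. [:-z, 1:] ^ order z P) = P"
    unfolding R_def by (rule complex_poly_decompose)
  have "annihilates I W ((\<Prod>z\<in>R. [:-z, 1:] ^ order z P) * 1)"
    using P dec unfolding annihilates_def
    by (metis (no_types, lifting) leading_coeff_0_iff mult.right_neutral mult_eq_0_iff
        poly_act_smult)
  moreover have "\<forall>z\<in>R. 1 \<le> order z P"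
    using P(1) by (auto simp: R_def order_root Suc_le_eq)
  ultimately have "annihilates I W ((\<Prod>z\<in>R. [:-z,1:]) * 1)"
    by (rule annihilates_reduce_multiplicities[OF fR, rotated])
  then show ?thesis using fR by auto
qed

end

section \<open>Spectral decomposition of unitary matrices\<close>

definition poly_mat :: "'i set \<Rightarrow> ('i \<Rightarrow> 'i \<Rightarrow> complex) \<Rightarrow> complex poly \<Rightarrow> 'i \<Rightarrow> 'i \<Rightarrow> complex" where
  "poly_mat I W p = (\<lambda>i j. if i \<in> I \<and> j \<in> I then poly_act I W p (unit_vec j) i else 0)"

lemma mvec_poly_mat:
  assumes "finite I" "vanishes_outside I v"
  shows "mvec I I (poly_mat I W p) v = poly_act I W p v"
proof -
  have "poly_act I W p v = (\<lambda>i. \<Sum>j\<in>I. v j * poly_act I W p (unit_vec j) i)"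
    by (subst vector_eq_sum_unit_vec[OF assms]) (rule poly_act_lincomb)
  moreover have "vanishes_outside I (poly_act I W p v)" by (rule vanishes_outside_poly_act[OF assms(2)])
  ultimately show ?thesis
    by (auto simp: mvec_def poly_mat_def vanishes_outside_def mult.commute intro!: ext sum.cong)
qed

lemma mmult_poly_mat:
  assumes "finite I"
  shows "mmult I I I (poly_mat I W p) (poly_mat I W q) = poly_mat I W (p * q)"
proof (intro ext)
  fix i j
  show "mmult I I I (poly_mat I W p) (poly_mat I W q) i j = poly_mat I W (p * q) i j"
  proof (cases "i \<in> I \<and> j \<in> I")
    case True
    have "mmult I I I (poly_mat I W p) (poly_mat I W q) i j
        = mvec I I (poly_mat I W p) (\<lambda>k. poly_mat I W q k j) i"
      using True by (simp add: mmult_eq_mvec_column)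
    also have "\<dots> = mvec I I (poly_mat I W p) (poly_act I W q (unit_vec j)) i"
      by (rule fun_cong[OF mvec_cong_vec]) (use True in \<open>simp add: poly_mat_def\<close>)
    also have "\<dots> = poly_act I W (p * q) (unit_vec j) i"
      using True assms by (simp add: mvec_poly_mat vanishes_outside_poly_act
          vanishes_outside_unit_vec poly_act_mult)
    finally show ?thesis using True by (simp add: poly_mat_def)
  qed (auto simp: mmult_def poly_mat_def)
qed

lemma poly_mat_sum: "poly_mat I W (\<Sum>a\<in>K. f a) = (\<lambda>i j. \<Sum>a\<in>K. poly_mat I W (f a) i j)"
  by (auto simp: poly_mat_def poly_act_sum intro!: ext)

lemma poly_mat_smult: "poly_mat I W (smult c p) = (\<lambda>i j. c * poly_mat I W p i j)"
  by (auto simp: poly_mat_def poly_act_smult intro!: ext)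

lemma poly_mat_zero [simp]: "poly_mat I W 0 = (\<lambda>i j. 0)"
  by (simp add: poly_mat_def fun_eq_iff)

lemma poly_mat_one: "poly_mat I W 1 = idm I"
  by (auto simp: poly_mat_def idm_def unit_vec_def intro!: ext)

lemma poly_mat_X: "finite I \<Longrightarrow> i \<in> I \<Longrightarrow> j \<in> I \<Longrightarrow> poly_mat I W [:0,1:] i j = W i j"
  by (simp add: poly_mat_def poly_act_X mvec_unit_vec)

lemma prod_linear_factors_dvd:
  fixes f :: "'a::idom poly"
  assumes "finite Z" "\<forall>z\<in>Z. poly f z = 0"
  shows "(\<Prod>z\<in>Z. [:-z,1:]) dvd f"
  using assms
proof (induction Z arbitrary: f rule: finite_induct)
  case empty then show ?case by simp
next
  case (insert z Z)
  have "[:-z,1:] dvd f" using insert.prems poly_eq_0_iff_dvd[of f z] by simp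
  then obtain g where g: "f = [:-z,1:] * g" by (auto elim: dvdE)
  have "\<forall>m\<in>Z. poly g m = 0"
  proof
    fix m assume m: "m \<in> Z"
    then have "m \<noteq> z" "poly f m = 0" using insert.hyps(2) insert.prems by auto
    then show "poly g m = 0" using g by simp
  qed
  then have "(\<Prod>z\<in>Z. [:-z,1:]) dvd g" by (rule insert.IH)
  then have "[:-z,1:] * (\<Prod>z\<in>Z. [:-z,1:]) dvd f" unfolding g by (rule mult_dvd_mono[OF dvd_refl])
  then show ?case using insert.hyps by simp
qed

definition lagrange_basis :: "complex set \<Rightarrow> complex \<Rightarrow> complex poly" where
  "lagrange_basis Z a = smult (inverse (\<Prod>m\<in>Z-{a}. a - m)) (\<Prod>m\<in>Z-{a}. [:-m,1:])"

lemma poly_lagrange_basis: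
  assumes "finite Z" "a \<in> Z" "b \<in> Z"
  shows "poly (lagrange_basis Z a) b = (if b = a then 1 else 0)"
proof (cases "b = a")
  case True
  have "(\<Prod>m\<in>Z-{a}. a - m) \<noteq> 0" using assms by (simp add: prod_zero_iff)
  then show ?thesis using True by (simp add: lagrange_basis_def poly_prod)
next
  case False
  have "(\<Prod>m\<in>Z-{a}. b - m) = 0" using assms False by (simp add: prod_zero_iff)
  then show ?thesis using False by (simp add: lagrange_basis_def poly_prod)
qed

lemma sum_poly_lagrange_basis:
  assumes "finite Z" "z \<in> Z"
  shows "(\<Sum>a\<in>Z. c a * poly (lagrange_basis Z a) z) = c z"
proof -
  have "(\<Sum>a\<in>Z. c a * poly (lagrange_basis Z a) z) = (\<Sum>a\<in>Z. if a = z then c a else 0)"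
    using assms by (intro sum.cong) (auto simp: poly_lagrange_basis)
  then show ?thesis using assms by simp
qed

text \<open>Once a unitary matrix is annihilated by the product of the linear factors at the nodes Z,
  its spectral projections are the Lagrange basis polynomials of Z evaluated at the matrix;
  nodes that are not eigenvalues give zero matrices and are discarded.\<close>

locale unitary_annihilated = unitary +
  fixes Z :: "complex set"
  assumes finite_nodes: "finite Z"
    and annihilates_nodes: "annihilates I W (\<Prod>z\<in>Z. [:-z,1:])"
begin

abbreviation proj :: "complex \<Rightarrow> ('a \<Rightarrow> complex) \<Rightarrow> 'a \<Rightarrow> complex" where
  "proj a \<equiv> poly_act I W (lagrange_basis Z a)"

lemma poly_act_eq_on_nodes:
  assumes "\<forall>z\<in>Z. poly f z = poly g z" "vanishes_outside I v"
  shows "poly_act I W f v = poly_act I W g v"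
proof -
  have "(\<Prod>z\<in>Z. [:-z,1:]) dvd (f - g)" using assms(1) by (intro prod_linear_factors_dvd finite_nodes) simp
  then have "annihilates I W (f - g)" by (rule annihilates_dvd[OF annihilates_nodes])
  then have "(\<lambda>i. poly_act I W f v i - poly_act I W g v i) = (\<lambda>i. 0)"
    using assms(2) by (simp add: annihilates_def poly_act_diff)
  then show ?thesis by (simp add: fun_eq_iff)
qed

lemma poly_mat_eq_on_nodes:
  assumes "\<forall>z\<in>Z. poly f z = poly g z"
  shows "poly_mat I W f = poly_mat I W g"
  using poly_act_eq_on_nodes[OF assms vanishes_outside_unit_vec] by (auto simp: poly_mat_def fun_eq_iff)

lemma sum_proj: "vanishes_outside I v \<Longrightarrow> (\<lambda>i. \<Sum>a\<in>Z. proj a v i) = v"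
  using poly_act_eq_on_nodes[of "\<Sum>a\<in>Z. lagrange_basis Z a" 1 v]
    sum_poly_lagrange_basis[OF finite_nodes, of _ "\<lambda>_. 1"]
  by (simp add: poly_act_sum poly_sum)

lemma proj_eigenvector:
  assumes "vanishes_outside I v" "a \<in> Z"
  shows "mvec I I W (proj a v) = (\<lambda>i. a * proj a v i)"
proof -
  have "poly_act I W ([:0,1:] * lagrange_basis Z a) v = poly_act I W (smult a (lagrange_basis Z a)) v"
    by (rule poly_act_eq_on_nodes[OF _ assms(1)]) (use assms in \<open>simp add: poly_lagrange_basis finite_nodes\<close>)
  then show ?thesis by (simp only: poly_act_mult poly_act_smult poly_act_X)
qed

lemma inner_on_proj_orthogonal:
  assumes "vanishes_outside I x" "vanishes_outside I y" "a \<in> Z" "b \<in> Z" "a \<noteq> b"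
  shows "inner_on I (proj a x) (proj b y) = 0"
proof -
  have adj: "mvec I I W' (proj b y) = (\<lambda>i. cnj b * proj b y i)"
    by (rule eigenvector_adjoint[OF vanishes_outside_poly_act[OF assms(2)] proj_eigenvector[OF assms(2,4)]])
  have "a * inner_on I (proj a x) (proj b y) = inner_on I (mvec I I W (proj a x)) (proj b y)"
    by (simp add: proj_eigenvector[OF assms(1,3)] inner_on_scale_left)
  also have "\<dots> = b * inner_on I (proj a x) (proj b y)"
    by (simp add: inner_on_mvec_adjoint adj inner_on_scale_right)
  finally show ?thesis using assms(5) by simp
qed

lemma inner_on_proj_symmetric:
  assumes x: "vanishes_outside I x" and y: "vanishes_outside I y" and a: "a \<in> Z"
  shows "inner_on I (proj a x) y = inner_on I x (proj a y)"
proof -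
  have "inner_on I (proj a x) y = inner_on I (proj a x) (\<lambda>i. \<Sum>b\<in>Z. proj b y i)"
    by (simp only: sum_proj[OF y])
  also have "\<dots> = (\<Sum>b\<in>Z. inner_on I (proj a x) (proj b y))"
    by (rule inner_on_sum_right)
  also have "\<dots> = inner_on I (proj a x) (proj a y)"
    using inner_on_proj_orthogonal[OF x y a] by (subst sum.remove[OF finite_nodes a]) (auto intro!: sum.neutral)
  also have "\<dots> = (\<Sum>b\<in>Z. inner_on I (proj b x) (proj a y))"
    using inner_on_proj_orthogonal[OF x y _ a] by (subst sum.remove[OF finite_nodes a]) (auto intro!: sum.neutral)
  also have "\<dots> = inner_on I (\<lambda>i. \<Sum>b\<in>Z. proj b x i) (proj a y)"
    by (rule inner_on_sum_left[symmetric])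
  also have "\<dots> = inner_on I x (proj a y)"
    by (simp only: sum_proj[OF x])
  finally show ?thesis .
qed

definition eigenvalues :: "complex set" where
  "eigenvalues = {a\<in>Z. \<exists>i\<in>I. \<exists>j\<in>I. poly_mat I W (lagrange_basis Z a) i j \<noteq> 0}"

lemma sum_eigenvalues:
  assumes "i \<in> I" "j \<in> I"
  shows "(\<Sum>a\<in>eigenvalues. f a * poly_mat I W (lagrange_basis Z a) i j)
    = (\<Sum>a\<in>Z. f a * poly_mat I W (lagrange_basis Z a) i j)"
  using assms finite_nodes by (intro sum.mono_neutral_left) (auto simp: eigenvalues_def)

lemma poly_mat_lagrange_basis_hermitian:
  assumes "a \<in> Z" "i \<in> I" "j \<in> I"
  shows "poly_mat I W (lagrange_basis Z a) i j = cnj (poly_mat I W (lagrange_basis Z a) j i)"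
proof -
  have "poly_mat I W (lagrange_basis Z a) i j = inner_on I (proj a (unit_vec j)) (unit_vec i)"
    using assms by (simp add: poly_mat_def inner_on_unit_vec finite_index)
  also have "\<dots> = inner_on I (unit_vec j) (proj a (unit_vec i))"
    using assms by (simp add: inner_on_proj_symmetric vanishes_outside_unit_vec)
  also have "\<dots> = cnj (inner_on I (proj a (unit_vec i)) (unit_vec j))"
    by (simp only: cnj_inner_on)
  also have "\<dots> = cnj (poly_mat I W (lagrange_basis Z a) j i)"
    using assms by (simp add: poly_mat_def inner_on_unit_vec finite_index)
  finally show ?thesis .
qed

lemma spectral_decomposition_lagrange:
  "spectral_decomposition I W eigenvalues (\<lambda>a. poly_mat I W (lagrange_basis Z a))"
proof -
  let ?F = "\<lambda>a. poly_mat I W (lagrange_basis Z a)"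
  have Z: "a \<in> Z" if "a \<in> eigenvalues" for a using that by (simp add: eigenvalues_def)
  have idem: "mmult I I I (?F a) (?F a) = ?F a" if "a \<in> Z" for a
    unfolding mmult_poly_mat[OF finite_index]
    by (rule poly_mat_eq_on_nodes) (use that in \<open>simp add: poly_lagrange_basis finite_nodes\<close>)
  have orth: "mmult I I I (?F a) (?F b) = poly_mat I W 0" if "a \<in> Z" "b \<in> Z" "a \<noteq> b" for a b
    unfolding mmult_poly_mat[OF finite_index]
    by (rule poly_mat_eq_on_nodes) (use that in \<open>simp add: poly_lagrange_basis finite_nodes\<close>)
  have "poly_mat I W (\<Sum>a\<in>Z. lagrange_basis Z a) = poly_mat I W 1"
    using sum_poly_lagrange_basis[OF finite_nodes, of _ "\<lambda>_. 1"]
    by (intro poly_mat_eq_on_nodes) (simp add: poly_sum)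
  then have resolution: "(\<Sum>a\<in>eigenvalues. ?F a i j) = idm I i j" if "i \<in> I" "j \<in> I" for i j
    using sum_eigenvalues[OF that, of "\<lambda>_. 1"] by (simp add: poly_mat_sum poly_mat_one fun_eq_iff)
  have "poly_mat I W (\<Sum>a\<in>Z. smult a (lagrange_basis Z a)) = poly_mat I W [:0,1:]"
    using sum_poly_lagrange_basis[OF finite_nodes, of _ "\<lambda>a. a"]
    by (intro poly_mat_eq_on_nodes) (simp add: poly_sum)
  then have expansion: "W i j = (\<Sum>a\<in>eigenvalues. a * ?F a i j)" if "i \<in> I" "j \<in> I" for i j
    using that sum_eigenvalues[OF that, of "\<lambda>a. a"]
    by (simp add: poly_mat_sum poly_mat_smult poly_mat_X finite_index fun_eq_iff)
  have "finite eigenvalues" using finite_nodes by (simp add: eigenvalues_def)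
  moreover have "\<forall>a\<in>eigenvalues. (\<exists>i\<in>I. \<exists>j\<in>I. ?F a i j \<noteq> 0) \<and>
      (\<forall>i\<in>I. \<forall>j\<in>I. ?F a i j = cnj (?F a j i)) \<and> mat_eq_on I I (mmult I I I (?F a) (?F a)) (?F a)"
  proof
    fix a assume a: "a \<in> eigenvalues"
    have "\<exists>i\<in>I. \<exists>j\<in>I. ?F a i j \<noteq> 0" using a by (simp add: eigenvalues_def)
    moreover have "\<forall>i\<in>I. \<forall>j\<in>I. ?F a i j = cnj (?F a j i)"
      using poly_mat_lagrange_basis_hermitian[OF Z[OF a]] by blast
    moreover have "mat_eq_on I I (mmult I I I (?F a) (?F a)) (?F a)"
      using idem[OF Z[OF a]] by (simp add: mat_eq_on_def)
    ultimately show "(\<exists>i\<in>I. \<exists>j\<in>I. ?F a i j \<noteq> 0) \<and> (\<forall>i\<in>I. \<forall>j\<in>I. ?F a i j = cnj (?F a j i)) \<and>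
        mat_eq_on I I (mmult I I I (?F a) (?F a)) (?F a)" by blast
  qed
  moreover have "\<forall>a\<in>eigenvalues. \<forall>b\<in>eigenvalues. a \<noteq> b \<longrightarrow>
      mat_eq_on I I (mmult I I I (?F a) (?F b)) (\<lambda>_ _. 0)"
    using orth by (simp add: eigenvalues_def mat_eq_on_def)
  ultimately show ?thesis
    unfolding spectral_decomposition_def mat_eq_on_def using resolution expansion by blast
qed

end

lemma spectral_projection_eigen:
  assumes sd: "spectral_decomposition I W S F" and a: "a \<in> S" and ij: "i \<in> I" "j \<in> I"
  shows "mmult I I I W (F a) i j = a * F a i j" "mmult I I I (F a) W i j = a * F a i j"
proof -
  from sd have fS: "finite S"
    and idem: "\<And>a. a \<in> S \<Longrightarrow> mat_eq_on I I (mmult I I I (F a) (F a)) (F a)"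
    and orth: "\<And>a b. a \<in> S \<Longrightarrow> b \<in> S \<Longrightarrow> a \<noteq> b \<Longrightarrow> mat_eq_on I I (mmult I I I (F a) (F b)) (\<lambda>_ _. 0)"
    and Wd: "mat_eq_on I I W (\<lambda>i j. \<Sum>a\<in>S. a * F a i j)"
    unfolding spectral_decomposition_def by blast+
  have delta: "(\<Sum>b\<in>S. b * mmult I I I (F b) (F a) i j) = a * F a i j"
              "(\<Sum>b\<in>S. b * mmult I I I (F a) (F b) i j) = a * F a i j"
  proof -
    have "(\<Sum>b\<in>S. b * mmult I I I (F b) (F a) i j) = (\<Sum>b\<in>S. if b = a then a * F a i j else 0)"
      using idem[OF a] orth[OF _ a] orth[OF a] ij by (intro sum.cong refl) (auto simp: mat_eq_on_def)
    then show "(\<Sum>b\<in>S. b * mmult I I I (F b) (F a) i j) = a * F a i j" using fS a by simp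
    have "(\<Sum>b\<in>S. b * mmult I I I (F a) (F b) i j) = (\<Sum>b\<in>S. if b = a then a * F a i j else 0)"
      using idem[OF a] orth[OF _ a] orth[OF a] ij by (intro sum.cong refl) (auto simp: mat_eq_on_def)
    then show "(\<Sum>b\<in>S. b * mmult I I I (F a) (F b) i j) = a * F a i j" using fS a by simp
  qed
  have "mmult I I I W (F a) i j = mmult I I I (\<lambda>i j. \<Sum>b\<in>S. b * F b i j) (F a) i j"
    by (rule fun_cong[OF fun_cong[OF mmult_cong[OF Wd]]]) (simp add: mat_eq_on_def)
  also have "\<dots> = (\<Sum>b\<in>S. b * mmult I I I (F b) (F a) i j)"
    using ij by (simp add: mmult_sum_left mmult_scale_left)
  finally show "mmult I I I W (F a) i j = a * F a i j" using delta by simp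
  have "mmult I I I (F a) W i j = mmult I I I (F a) (\<lambda>i j. \<Sum>b\<in>S. b * F b i j) i j"
    by (rule fun_cong[OF fun_cong[OF mmult_cong[OF _ Wd]]]) (simp add: mat_eq_on_def)
  also have "\<dots> = (\<Sum>b\<in>S. b * mmult I I I (F a) (F b) i j)"
    using ij by (simp add: mmult_sum_right mmult_scale_right)
  finally show "mmult I I I (F a) W i j = a * F a i j" using delta by simp
qed

lemma spectral_projections_orthogonal:
  assumes sd: "spectral_decomposition I W S F" and sd': "spectral_decomposition I W S' F'"
    and a: "a \<in> S" and b: "b \<in> S'" and ab: "a \<noteq> b" and ij: "i \<in> I" "j \<in> I"
  shows "mmult I I I (F a) (F' b) i j = 0"
proof -
  have e1: "mat_eq_on I I (\<lambda>i j. a * F a i j) (mmult I I I (F a) W)"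
    using spectral_projection_eigen(2)[OF sd a] by (simp add: mat_eq_on_def)
  have e2: "mat_eq_on I I (mmult I I I W (F' b)) (\<lambda>i j. b * F' b i j)"
    using spectral_projection_eigen(1)[OF sd' b] by (simp add: mat_eq_on_def)
  have "a * mmult I I I (F a) (F' b) i j = mmult I I I (\<lambda>i j. a * F a i j) (F' b) i j"
    by (simp add: mmult_scale_left)
  also have "\<dots> = mmult I I I (mmult I I I (F a) W) (F' b) i j"
    by (rule fun_cong[OF fun_cong[OF mmult_cong[OF e1]]]) (simp add: mat_eq_on_def)
  also have "\<dots> = mmult I I I (F a) (mmult I I I W (F' b)) i j" by (simp add: mmult_assoc)
  also have "\<dots> = mmult I I I (F a) (\<lambda>i j. b * F' b i j) i j"
    by (rule fun_cong[OF fun_cong[OF mmult_cong[OF _ e2]]]) (simp add: mat_eq_on_def)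
  also have "\<dots> = b * mmult I I I (F a) (F' b) i j" by (simp add: mmult_scale_right)
  finally have "(a - b) * mmult I I I (F a) (F' b) i j = 0" by (simp add: algebra_simps)
  then show ?thesis using ab by simp
qed

lemma spectral_projection_unique:
  assumes fin: "finite I" and sd: "spectral_decomposition I W S F" and sd': "spectral_decomposition I W S' F'"
    and a: "a \<in> S"
  shows "a \<in> S' \<and> mat_eq_on I I (F a) (F' a)"
proof -
  from sd have fS: "finite S" and nz: "\<exists>i\<in>I. \<exists>j\<in>I. F a i j \<noteq> 0"
    and sumS: "mat_eq_on I I (\<lambda>i j. \<Sum>a\<in>S. F a i j) (idm I)"
    unfolding spectral_decomposition_def using a by blast+
  from sd' have fS': "finite S'"
    and sumS': "mat_eq_on I I (\<lambda>i j. \<Sum>a\<in>S'. F' a i j) (idm I)"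
    unfolding spectral_decomposition_def by blast+
  have Fa: "F a i j = (\<Sum>b\<in>S'. mmult I I I (F a) (F' b) i j)" if ij: "i \<in> I" "j \<in> I" for i j
  proof -
    have "F a i j = mmult I I I (F a) (idm I) i j" using ij fin by (simp add: mmult_idm_right)
    also have "\<dots> = mmult I I I (F a) (\<lambda>i j. \<Sum>b\<in>S'. F' b i j) i j"
      by (rule fun_cong[OF fun_cong[OF mmult_cong]]) (use sumS' in \<open>auto simp: mat_eq_on_def\<close>)
    also have "\<dots> = (\<Sum>b\<in>S'. mmult I I I (F a) (F' b) i j)" using ij by (simp add: mmult_sum_right)
    finally show ?thesis .
  qed
  have aS': "a \<in> S'"
  proof (rule ccontr)
    assume "a \<notin> S'"
    then have "F a i j = 0" if "i \<in> I" "j \<in> I" for i j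
      using Fa[OF that] spectral_projections_orthogonal[OF sd sd' a _ _ that] by (metis (mono_tags, lifting) sum.neutral)
    then show False using nz by blast
  qed
  have "F a i j = F' a i j" if ij: "i \<in> I" "j \<in> I" for i j
  proof -
    have "F a i j = (\<Sum>b\<in>S'. if b = a then mmult I I I (F a) (F' a) i j else 0)"
      unfolding Fa[OF ij] using spectral_projections_orthogonal[OF sd sd' a _ _ ij] by (intro sum.cong) auto
    also have "\<dots> = mmult I I I (F a) (F' a) i j" using fS' aS' by simp
    finally have 1: "F a i j = mmult I I I (F a) (F' a) i j" .
    have "F' a i j = mmult I I I (idm I) (F' a) i j" using ij fin by (simp add: mmult_idm_left)
    also have "\<dots> = mmult I I I (\<lambda>i j. \<Sum>b\<in>S. F b i j) (F' a) i j"
      by (rule fun_cong[OF fun_cong[OF mmult_cong]]) (use sumS in \<open>auto simp: mat_eq_on_def\<close>)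
    also have "\<dots> = (\<Sum>b\<in>S. mmult I I I (F b) (F' a) i j)" using ij by (simp add: mmult_sum_left)
    also have "\<dots> = (\<Sum>b\<in>S. if b = a then mmult I I I (F a) (F' a) i j else 0)"
      using spectral_projections_orthogonal[OF sd sd' _ aS' _ ij] by (intro sum.cong) auto
    also have "\<dots> = mmult I I I (F a) (F' a) i j" using fS a by simp
    finally show ?thesis using 1 by simp
  qed
  then show ?thesis using aS' by (simp add: mat_eq_on_def)
qed

lemma spectral_decomposition_unique:
  assumes fin: "finite I" and sd: "spectral_decomposition I W S F" and sd': "spectral_decomposition I W S' F'"
  shows "S = S'" "\<And>a i j. a \<in> S \<Longrightarrow> i \<in> I \<Longrightarrow> j \<in> I \<Longrightarrow> F a i j = F' a i j"
proof -
  show "S = S'" using spectral_projection_unique[OF fin sd sd'] spectral_projection_unique[OF fin sd' sd] by blast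
  show "\<And>a i j. a \<in> S \<Longrightarrow> i \<in> I \<Longrightarrow> j \<in> I \<Longrightarrow> F a i j = F' a i j"
    using spectral_projection_unique[OF fin sd sd'] by (simp add: mat_eq_on_def)
qed


lemma principal_hamiltonian_eq:
  assumes "finite I" "spectral_decomposition I W S F"
  shows "principal_hamiltonian I W
    = (\<lambda>i j. if i \<in> I \<and> j \<in> I then \<Sum>a\<in>S. (- \<i> * Ln a) * F a i j else 0)"
  unfolding principal_hamiltonian_def
proof (rule the_equality)
  fix H assume "\<exists>S' F'. spectral_decomposition I W S' F' \<and>
    H = (\<lambda>i j. if i \<in> I \<and> j \<in> I then \<Sum>a\<in>S'. (- \<i> * Ln a) * F' a i j else 0)"
  then obtain S' F' where sd': "spectral_decomposition I W S' F'"
    and H: "H = (\<lambda>i j. if i \<in> I \<and> j \<in> I then \<Sum>a\<in>S'. (- \<i> * Ln a) * F' a i j else 0)"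
    by blast
  show "H = (\<lambda>i j. if i \<in> I \<and> j \<in> I then \<Sum>a\<in>S. (- \<i> * Ln a) * F a i j else 0)"
    unfolding H using spectral_decomposition_unique[OF assms(1) sd' assms(2)]
    by (auto intro!: ext sum.cong)
qed (use assms(2) in blast)

lemma (in unitary_annihilated) principal_hamiltonian_lagrange:
  "principal_hamiltonian I W
    = (\<lambda>i j. \<Sum>a\<in>Z. (- \<i> * Ln a) * poly_mat I W (lagrange_basis Z a) i j)"
  unfolding principal_hamiltonian_eq[OF finite_index spectral_decomposition_lagrange]
proof (intro ext)
  fix i j
  show "(if i \<in> I \<and> j \<in> I then \<Sum>a\<in>eigenvalues. (- \<i> * Ln a) * poly_mat I W (lagrange_basis Z a) i j
      else 0) = (\<Sum>a\<in>Z. (- \<i> * Ln a) * poly_mat I W (lagrange_basis Z a) i j)"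
    using sum_eigenvalues[of i j "\<lambda>a. - \<i> * Ln a"] by (auto simp: poly_mat_def)
qed

lemma (in unitary) principal_hamiltonian_outside:
  assumes "i \<notin> I \<or> j \<notin> I"
  shows "principal_hamiltonian I W i j = 0"
proof -
  obtain Z where "finite Z" "annihilates I W (\<Prod>z\<in>Z. [:-z,1:])"
    using exists_annihilating_product_linear_factors by blast
  then have "unitary_annihilated I W W' Z"
    by (simp add: unitary_annihilated_def unitary_annihilated_axioms_def unitary_axioms)
  then show ?thesis
    using assms by (auto simp: unitary_annihilated.principal_hamiltonian_lagrange poly_mat_def)
qed

section \<open>Orbits of a bijection of a finite set\<close>

lemma funpow_in: "f ` A \<subseteq> A \<Longrightarrow> a \<in> A \<Longrightarrow> (f ^^ n) a \<in> A"
  by (induction n) auto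

lemma funpow_inj_on:
  assumes "f ` A \<subseteq> A" "inj_on f A" "x \<in> A" "y \<in> A" "(f ^^ n) x = (f ^^ n) y"
  shows "x = y"
  using assms(5)
proof (induction n)
  case 0 then show ?case by simp
next
  case (Suc n)
  have "f ((f ^^ n) x) = f ((f ^^ n) y)" using Suc.prems by simp
  then have "(f ^^ n) x = (f ^^ n) y"
    using inj_onD[OF assms(2)] funpow_in[OF assms(1) assms(3)] funpow_in[OF assms(1) assms(4)] by blast
  then show ?case by (rule Suc.IH)
qed

lemma funpow_mult_period: "(f ^^ p) a = a \<Longrightarrow> (f ^^ (k * p)) a = a"
  by (induction k) (simp_all add: funpow_add)

lemma funpow_diff_eq:
  assumes "bij_betw f A A" "a \<in> A" "i \<le> j" "(f ^^ i) a = (f ^^ j) a"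
  shows "(f ^^ (j - i)) a = a"
proof -
  have maps: "f ` A \<subseteq> A" and inj: "inj_on f A"
    using assms(1) by (auto simp: bij_betw_def)
  have "(f ^^ i) ((f ^^ (j - i)) a) = (f ^^ i) a"
    using assms(3,4) by (metis funpow_add comp_apply le_add_diff_inverse)
  then show ?thesis by (rule funpow_inj_on[OF maps inj funpow_in[OF maps assms(2)] assms(2)])
qed

lemma funpow_period_exists:
  assumes "finite A" "bij_betw f A A" "a \<in> A"
  shows "\<exists>p>0. (f ^^ p) a = a"
proof -
  let ?g = "\<lambda>n. (f ^^ n) a"
  have "?g ` {..card A} \<subseteq> A" using funpow_in[of f A a] assms(2,3) by (auto simp: bij_betw_def)
  then have "card (?g ` {..card A}) \<le> card A" by (rule card_mono[OF assms(1)])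
  then have "\<not> inj_on ?g {..card A}" by (intro pigeonhole) simp
  then obtain i j where "i \<noteq> j" "?g i = ?g j" by (auto simp: inj_on_def)
  then obtain i j where "i < j" "?g i = ?g j" by (metis linorder_neqE_nat)
  then show ?thesis using funpow_diff_eq[OF assms(2,3)] by (intro exI[of _ "j - i"]) auto
qed

lemma funpow_common_period:
  assumes "finite A" "bij_betw f A A"
  obtains N where "N > 0" "\<And>a. a \<in> A \<Longrightarrow> (f ^^ N) a = a"
proof -
  obtain p where p: "\<And>a. a \<in> A \<Longrightarrow> p a > 0 \<and> (f ^^ p a) a = a"
    using funpow_period_exists[OF assms] by metis
  have "(f ^^ (\<Prod>a\<in>A. p a)) a = a" if "a \<in> A" for a
  proof -
    have "p a dvd (\<Prod>a\<in>A. p a)" using that assms(1) by (simp add: dvd_prodI)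
    then obtain k where "(\<Prod>a\<in>A. p a) = p a * k" by (rule dvdE)
    then show ?thesis using funpow_mult_period[where f = f and p = "p a" and a = a and k = k] p[OF that] by (simp add: mult.commute)
  qed
  moreover have "(\<Prod>a\<in>A. p a) > 0" using p by (intro prod_pos) blast
  ultimately show ?thesis using that by blast
qed

lemma funpow_least_period:
  assumes "finite A" "bij_betw f A A" "a \<in> A"
  obtains p where "0 < p" "(f ^^ p) a = a" "\<And>n. (f ^^ n) a = (f ^^ (n mod p)) a"
    "inj_on (\<lambda>n. (f ^^ n) a) {..<p}"
proof -
  define p where "p = (LEAST k. 0 < k \<and> (f ^^ k) a = a)"
  have p: "0 < p \<and> (f ^^ p) a = a"
    unfolding p_def using funpow_period_exists[OF assms] by (metis (mono_tags, lifting) LeastI)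
  have minimal: "\<not> (0 < k \<and> (f ^^ k) a = a)" if "k < p" for k
    using not_less_Least[of k "\<lambda>k. 0 < k \<and> (f ^^ k) a = a"] that unfolding p_def by blast
  have "(f ^^ n) a = (f ^^ (n mod p)) a" for n
  proof -
    have "(f ^^ n) a = (f ^^ (n mod p)) ((f ^^ (n div p * p)) a)"
      by (metis comp_apply funpow_add mod_div_mult_eq)
    then show ?thesis using funpow_mult_period p by metis
  qed
  moreover have "inj_on (\<lambda>n. (f ^^ n) a) {..<p}"
  proof (rule inj_onI)
    have "i = j" if "i \<le> j" "j < p" "(f ^^ i) a = (f ^^ j) a" for i j
      using funpow_diff_eq[OF assms(2,3) that(1,3)] minimal[of "j - i"] that by linarith
    then show "i = j" if "i \<in> {..<p}" "j \<in> {..<p}" "(f ^^ i) a = (f ^^ j) a" for i j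
      using that by (metis lessThan_iff linorder_le_cases)
  qed
  ultimately show ?thesis using that p by blast
qed

lemma facial_orbit_subset: "f ` A \<subseteq> A \<Longrightarrow> a \<in> A \<Longrightarrow> facial_orbit f a \<subseteq> A"
  unfolding facial_orbit_def using funpow_in[of f A a] by blast

lemma facial_orbit_self: "a \<in> facial_orbit f a"
  unfolding facial_orbit_def by (auto intro: exI[of _ 0])

lemma facial_orbit_eq:
  assumes N: "N > 0" "(f ^^ N) a = a" and b: "b \<in> facial_orbit f a"
  shows "facial_orbit f b = facial_orbit f a"
proof -
  from b obtain k where k: "b = (f ^^ k) a" by (auto simp: facial_orbit_def)
  define m where "m = N * (k + 1) - k"
  have "k \<le> N * (k + 1)" using N(1) by (cases N) simp_all
  then have "m + k = (k + 1) * N" by (simp add: m_def mult.commute)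
  then have "(f ^^ m) b = (f ^^ ((k + 1) * N)) a" by (metis k comp_apply funpow_add)
  then have return_to_a: "(f ^^ m) b = a" using funpow_mult_period[OF N(2), of "k + 1"] by (simp only:)
  show ?thesis
  proof (intro equalityI subsetI)
    fix x assume "x \<in> facial_orbit f b"
    then obtain n where "x = (f ^^ n) b" by (auto simp: facial_orbit_def)
    then have "x = (f ^^ (n + k)) a" by (simp add: k funpow_add)
    then show "x \<in> facial_orbit f a" by (auto simp: facial_orbit_def)
  next
    fix x assume "x \<in> facial_orbit f a"
    then obtain n where "x = (f ^^ n) a" by (auto simp: facial_orbit_def)
    then have "x = (f ^^ (n + m)) b" by (simp add: return_to_a[symmetric] funpow_add)
    then show "x \<in> facial_orbit f b" by (auto simp: facial_orbit_def)
  qed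
qed

lemma card_residue_class:
  fixes p k m :: nat
  assumes "0 < p" "k < p"
  shows "card {n\<in>{..<m * p}. n mod p = k} = m"
proof -
  have "{n\<in>{..<m * p}. n mod p = k} = (\<lambda>i. i * p + k) ` {..<m}"
  proof (intro equalityI subsetI)
    fix n assume "n \<in> {n\<in>{..<m * p}. n mod p = k}"
    then have n: "n < m * p" "n mod p = k" by auto
    have "n = (n div p) * p + k" using n(2) by (metis div_mult_mod_eq)
    moreover have "n div p < m" using n(1) assms(1) by (simp add: div_less_iff_less_mult)
    ultimately show "n \<in> (\<lambda>i. i * p + k) ` {..<m}" by (auto intro: image_eqI)
  next
    fix n assume "n \<in> (\<lambda>i. i * p + k) ` {..<m}"
    then obtain i where i: "i < m" "n = i * p + k" by auto
    have "Suc i * p \<le> m * p" using i(1) by (intro mult_le_mono1) simp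
    then show "n \<in> {n\<in>{..<m * p}. n mod p = k}" using i assms by simp
  qed
  moreover have "inj_on (\<lambda>i. i * p + k) {..<m}" using assms(1) by (auto simp: inj_on_def)
  ultimately show ?thesis by (simp add: card_image)
qed

lemma card_visits_mult_card_facial_orbit:
  assumes "finite A" "bij_betw f A A" "a \<in> A" "(f ^^ N) a = a"
  shows "card {n\<in>{..<N}. (f ^^ n) a = b} * card (facial_orbit f a)
    = (if b \<in> facial_orbit f a then N else 0)"
proof -
  obtain p where p: "0 < p" "(f ^^ p) a = a" and mod_p: "\<And>n. (f ^^ n) a = (f ^^ (n mod p)) a"
    and inj: "inj_on (\<lambda>n. (f ^^ n) a) {..<p}"
    using funpow_least_period[OF assms(1-3)] by blast
  have orbit: "facial_orbit f a = (\<lambda>n. (f ^^ n) a) ` {..<p}"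
    unfolding facial_orbit_def using mod_p p(1) by (auto intro!: image_eqI[where x = "_ mod p"])
  have card_orbit: "card (facial_orbit f a) = p"
    unfolding orbit by (rule card_image[OF inj, simplified])
  have "N mod p = 0"
    using inj_onD[OF inj, of "N mod p" 0] mod_p[of N] assms(4) p(1) by simp
  then have N: "N = (N div p) * p" using div_mult_mod_eq[of N p] by simp
  show ?thesis
  proof (cases "b \<in> facial_orbit f a")
    case True
    then obtain k where k: "k < p" "b = (f ^^ k) a" unfolding orbit by auto
    have "(f ^^ n) a = b \<longleftrightarrow> n mod p = k" for n
      using inj_onD[OF inj, of "n mod p" k] mod_p[of n] k p(1) by auto
    then have "{n\<in>{..<N}. (f ^^ n) a = b} = {n\<in>{..<(N div p) * p}. n mod p = k}"
      using N by auto
    then have "card {n\<in>{..<N}. (f ^^ n) a = b} = N div p"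
      using card_residue_class[OF p(1) k(1)] by simp
    then show ?thesis using True card_orbit N by (metis mult.commute)
  next
    case False
    then have "{n\<in>{..<N}. (f ^^ n) a = b} = {}" by (auto simp: facial_orbit_def)
    then show ?thesis using False by simp
  qed
qed

lemma sum_card_fiber:
  assumes "finite S" "finite B" "\<And>n. n \<in> S \<Longrightarrow> g n \<in> B"
  shows "(\<Sum>b\<in>{b\<in>B. h b = a}. card {n\<in>S. g n = b}) = card {n\<in>S. h (g n) = a}"
proof -
  have "{n\<in>S. h (g n) = a} = (\<Union>b\<in>{b\<in>B. h b = a}. {n\<in>S. g n = b})" using assms(3) by auto
  moreover have "card (\<Union>b\<in>{b\<in>B. h b = a}. {n\<in>S. g n = b}) = (\<Sum>b\<in>{b\<in>B. h b = a}. card {n\<in>S. g n = b})"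
    using assms(1,2) by (intro card_UN_disjoint) auto
  ultimately show ?thesis by simp
qed

section \<open>Class projections and the transition matrix\<close>

definition class_proj :: "'a set \<Rightarrow> ('a \<Rightarrow> 'a set) \<Rightarrow> 'a \<Rightarrow> 'a \<Rightarrow> complex" where
  "class_proj A cls = (\<lambda>a b. if a \<in> A \<and> b \<in> A \<and> b \<in> cls a then 1 / of_nat (card (cls a)) else 0)"

definition is_class_map :: "'a set \<Rightarrow> ('a \<Rightarrow> 'a set) \<Rightarrow> bool" where
  "is_class_map A cls \<longleftrightarrow> finite A \<and> (\<forall>a\<in>A. a \<in> cls a \<and> cls a \<subseteq> A \<and> (\<forall>b\<in>cls a. cls b = cls a))"

definition same_tail :: "('v \<times> 'w) set \<Rightarrow> 'v \<times> 'w \<Rightarrow> ('v \<times> 'w) set" where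
  "same_tail A a = {c\<in>A. fst c = fst a}"

definition reflection :: "'a set \<Rightarrow> ('a \<Rightarrow> 'a \<Rightarrow> complex) \<Rightarrow> 'a \<Rightarrow> 'a \<Rightarrow> complex" where
  "reflection A P = (\<lambda>i j. 2 * P i j - idm A i j)"

lemma class_proj_idem:
  assumes "is_class_map A cls"
  shows "mmult A A A (class_proj A cls) (class_proj A cls) = class_proj A cls"
proof (intro ext)
  fix a b
  show "mmult A A A (class_proj A cls) (class_proj A cls) a b = class_proj A cls a b"
  proof (cases "a \<in> A \<and> b \<in> A")
    case True
    have fA: "finite A" and sub: "cls a \<subseteq> A" and aa: "a \<in> cls a"
      and same_class: "\<And>c. c \<in> cls a \<Longrightarrow> cls c = cls a"
      using assms True unfolding is_class_map_def by auto
    have card_pos: "card (cls a) > 0" using finite_subset[OF sub fA] aa by (auto simp: card_gt_0_iff)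
    let ?x = "class_proj A cls a b / of_nat (card (cls a))"
    have "(\<Sum>c\<in>A. class_proj A cls a c * class_proj A cls c b) = (\<Sum>c\<in>A. if c \<in> cls a then ?x else 0)"
      using True same_class by (intro sum.cong refl) (auto simp: class_proj_def)
    also have "\<dots> = (\<Sum>c\<in>cls a. ?x)"
      using sub by (simp add: sum.inter_filter[OF fA, symmetric] Int_absorb1 Collect_mem_eq
          flip: Int_def)
    also have "\<dots> = class_proj A cls a b" using card_pos by simp
    finally show ?thesis using True by (simp add: mmult_def)
  qed (auto simp: mmult_def class_proj_def)
qed

lemma class_proj_hermitian:
  assumes "is_class_map A cls"
  shows "class_proj A cls a b = cnj (class_proj A cls b a)"
proof (cases "a \<in> A \<and> b \<in> A")
  case True
  have "b \<in> cls a \<longleftrightarrow> a \<in> cls b" and "b \<in> cls a \<Longrightarrow> cls b = cls a"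
    using assms True unfolding is_class_map_def by metis+
  then show ?thesis using True by (auto simp: class_proj_def)
qed (auto simp: class_proj_def)

lemma reflection_involution:
  assumes fA: "finite A" and P: "mat_eq_on A A (mmult A A A P P) P"
  shows "mat_eq_on A A (mmult A A A (reflection A P) (reflection A P)) (idm A)"
proof (unfold mat_eq_on_def, intro ballI)
  fix i j assume ij: "i \<in> A" "j \<in> A"
  have PP: "(\<Sum>k\<in>A. P i k * P k j) = P i j" using P ij by (simp add: mat_eq_on_def mmult_def)
  have "(\<Sum>k\<in>A. (2 * P i k - idm A i k) * (2 * P k j - idm A k j)) =
        (\<Sum>k\<in>A. 4 * (P i k * P k j) - 2 * (P i k * idm A k j) - 2 * (idm A i k * P k j)
          + idm A i k * idm A k j)"
    by (intro sum.cong refl) (simp add: algebra_simps)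
  also have "\<dots> = 4 * (\<Sum>k\<in>A. P i k * P k j) - 2 * (\<Sum>k\<in>A. P i k * idm A k j)
      - 2 * (\<Sum>k\<in>A. idm A i k * P k j) + (\<Sum>k\<in>A. idm A i k * idm A k j)"
    by (simp add: sum.distrib sum_subtractf sum_distrib_left)
  also have "\<dots> = idm A i j"
    using ij fA by (simp add: PP sum_idm_right sum_idm_left)
  finally show "mmult A A A (reflection A P) (reflection A P) i j = idm A i j"
    using ij by (simp add: mmult_def reflection_def)
qed

lemma mmult_adjoint:
  assumes "\<And>i j. i \<in> A \<Longrightarrow> j \<in> A \<Longrightarrow> B' i j = cnj (B j i)"
    "\<And>i j. i \<in> A \<Longrightarrow> j \<in> A \<Longrightarrow> C' i j = cnj (C j i)" "i \<in> A" "j \<in> A"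
  shows "mmult A A A C' B' i j = cnj (mmult A A A B C j i)"
proof -
  have "mmult A A A C' B' i j = (\<Sum>k\<in>A. cnj (B j k * C k i))"
    using assms by (simp add: mmult_def mult.commute cong: sum.cong)
  then show ?thesis using assms by (simp add: mmult_def cnj_sum)
qed

lemma mmult_cancel_middle:
  assumes "finite A" "mat_eq_on A A (mmult A A A X Y) (idm A)"
  shows "mmult A A A (mmult A A A Z X) (mmult A A A Y V) = mmult A A A Z V"
proof -
  have "mmult A A A (mmult A A A Z X) (mmult A A A Y V) = mmult A A A Z (mmult A A A (mmult A A A X Y) V)"
    by (simp add: mmult_assoc)
  also have "mmult A A A (mmult A A A X Y) V = mmult A A A (idm A) V"
    by (rule mmult_cong[OF assms(2)]) (simp add: mat_eq_on_def)
  also have "mmult A A A Z (mmult A A A (idm A) V) = mmult A A A Z V"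
    by (rule mmult_cong) (simp_all add: mat_eq_on_def mmult_idm_left assms(1))
  finally show ?thesis .
qed

lemma unitary_mmult:
  assumes "unitary A U U'" "unitary A V V'"
  shows "unitary A (mmult A A A U V) (mmult A A A V' U')"
proof -
  interpret U: unitary A U U' by fact
  interpret V: unitary A V V' by fact
  show ?thesis
  proof
    show "finite A" by (rule U.finite_index)
    show "\<And>i j. i \<in> A \<Longrightarrow> j \<in> A \<Longrightarrow> mmult A A A V' U' i j = cnj (mmult A A A U V j i)"
      by (rule mmult_adjoint[OF U.adjoint V.adjoint])
    show "mat_eq_on A A (mmult A A A (mmult A A A V' U') (mmult A A A U V)) (idm A)"
      unfolding mmult_cancel_middle[OF U.finite_index U.adjoint_left_inverse]
      by (rule V.adjoint_left_inverse)
    show "mat_eq_on A A (mmult A A A (mmult A A A U V) (mmult A A A V' U')) (idm A)"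
      unfolding mmult_cancel_middle[OF U.finite_index V.adjoint_right_inverse]
      by (rule U.adjoint_right_inverse)
  qed
qed

lemma unitary_reflection_class_proj:
  assumes "is_class_map A cls"
  shows "unitary A (reflection A (class_proj A cls)) (reflection A (class_proj A cls))"
proof -
  have fA: "finite A" using assms by (simp add: is_class_map_def)
  have involution:
    "mat_eq_on A A (mmult A A A (reflection A (class_proj A cls)) (reflection A (class_proj A cls))) (idm A)"
    by (rule reflection_involution[OF fA]) (simp add: class_proj_idem[OF assms] mat_eq_on_def)
  show ?thesis
  proof
    show "\<And>i j. i \<in> A \<Longrightarrow> j \<in> A \<Longrightarrow>
        reflection A (class_proj A cls) i j = cnj (reflection A (class_proj A cls) j i)"
    proof -
      fix i j assume "i \<in> A" "j \<in> A"
      have "class_proj A cls i j = cnj (class_proj A cls j i)" by (rule class_proj_hermitian[OF assms])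
      then show "reflection A (class_proj A cls) i j = cnj (reflection A (class_proj A cls) j i)"
        by (simp add: reflection_def idm_def)
    qed
  qed (use fA involution in simp_all)
qed

lemma is_class_map_facial_orbit:
  assumes "finite A" "bij_betw f A A"
  shows "is_class_map A (facial_orbit f)"
  unfolding is_class_map_def
proof (intro conjI ballI assms(1))
  obtain N where N: "N > 0" "\<And>a. a \<in> A \<Longrightarrow> (f ^^ N) a = a"
    using funpow_common_period[OF assms] by blast
  fix a assume a: "a \<in> A"
  show "a \<in> facial_orbit f a" by (rule facial_orbit_self)
  show "facial_orbit f a \<subseteq> A"
    using facial_orbit_subset[OF _ a] assms(2) by (simp add: bij_betw_def)
  show "facial_orbit f b = facial_orbit f a" if "b \<in> facial_orbit f a" for b
    by (rule facial_orbit_eq[OF N(1) N(2)[OF a] that])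
qed

lemma is_class_map_same_tail: "finite A \<Longrightarrow> is_class_map A (same_tail A)"
  by (auto simp: is_class_map_def same_tail_def)

lemma class_proj_facial_orbit_average:
  assumes "finite A" "bij_betw f A A" "N > 0" "(f ^^ N) a = a" "a \<in> A" "b \<in> A"
  shows "class_proj A (facial_orbit f) a b = of_nat (card {n\<in>{..<N}. (f ^^ n) a = b}) / of_nat N"
proof -
  let ?O = "facial_orbit f a" and ?S = "card {n\<in>{..<N}. (f ^^ n) a = b}"
  have key: "?S * card ?O = (if b \<in> ?O then N else 0)"
    by (rule card_visits_mult_card_facial_orbit[OF assms(1,2,5,4)])
  have "finite ?O"
    using finite_subset[OF facial_orbit_subset assms(1)] assms(2,5) by (auto simp: bij_betw_def)
  then have "card ?O > 0" using facial_orbit_self[of a f] by (auto simp: card_gt_0_iff)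
  show ?thesis
  proof (cases "b \<in> ?O")
    case True
    then have "of_nat ?S * of_nat (card ?O) = (of_nat N :: complex)"
      using key by (metis of_nat_mult)
    then show ?thesis using True assms(3,5,6) \<open>card ?O > 0\<close> by (simp add: class_proj_def field_simps)
  next
    case False
    then have "?S = 0" using key \<open>card ?O > 0\<close> by simp
    then show ?thesis using False by (simp add: class_proj_def)
  qed
qed

lemma of_real_inverse_sqrt_squared:
  "complex_of_real (1 / sqrt (real n)) * complex_of_real (1 / sqrt (real n)) = 1 / of_nat n"
  by (simp flip: of_real_mult)

lemma face_eq_facial_orbit:
  assumes "finite (arcs V E)" "bij_betw \<sigma> (arcs V E) (arcs V E)" "F \<in> faces V E \<sigma>" "a \<in> F"
  shows "F = facial_orbit \<sigma> a"
proof -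
  obtain N where N: "N > 0" "\<And>a. a \<in> arcs V E \<Longrightarrow> (\<sigma> ^^ N) a = a"
    using funpow_common_period[OF assms(1,2)] by blast
  obtain c where c: "c \<in> arcs V E" "F = facial_orbit \<sigma> c" using assms(3) unfolding faces_def by blast
  then show ?thesis using facial_orbit_eq[OF N(1) N(2)[OF c(1)]] assms(4) by simp
qed

lemma mmult_Mhat_transpose:
  assumes fin: "finite (arcs V E)" and bij: "bij_betw \<sigma> (arcs V E) (arcs V E)"
  shows "mmult (arcs V E) (faces V E \<sigma>) (arcs V E) (Mhat V E \<sigma>) (mtrans (Mhat V E \<sigma>))
         = class_proj (arcs V E) (facial_orbit \<sigma>)"
proof (intro ext)
  let ?A = "arcs V E"
  fix a b
  note face_eq = face_eq_facial_orbit[OF fin bij]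
  show "mmult ?A (faces V E \<sigma>) ?A (Mhat V E \<sigma>) (mtrans (Mhat V E \<sigma>)) a b
    = class_proj ?A (facial_orbit \<sigma>) a b"
  proof (cases "a \<in> ?A \<and> b \<in> ?A")
    case True
    let ?O = "facial_orbit \<sigma> a"
    let ?c = "complex_of_real (1 / sqrt (real (card ?O)))"
    have sub: "?O \<subseteq> ?A"
      using facial_orbit_subset[of \<sigma> ?A a] bij True by (auto simp: bij_betw_def)
    then have OA: "{x \<in> ?A. x \<in> ?O} = ?O" by auto
    have Of: "?O \<in> faces V E \<sigma>" using True by (simp add: faces_def)
    have "Mhat V E \<sigma> a F * mtrans (Mhat V E \<sigma>) F b
        = (if F = ?O then (if b \<in> ?O then ?c * ?c else 0) else 0)" if F: "F \<in> faces V E \<sigma>" for F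
    proof (cases "a \<in> F")
      case True
      then show ?thesis using \<open>a \<in> ?A \<and> b \<in> ?A\<close> F face_eq[OF F True] OA
        by (simp add: Mhat_def mtrans_def)
    next
      case False
      then have "F \<noteq> ?O" using facial_orbit_self[of a \<sigma>] by blast
      then show ?thesis using False by (simp add: Mhat_def mtrans_def)
    qed
    then have "(\<Sum>F\<in>faces V E \<sigma>. Mhat V E \<sigma> a F * mtrans (Mhat V E \<sigma>) F b)
        = (\<Sum>F\<in>faces V E \<sigma>. if F = ?O then (if b \<in> ?O then ?c * ?c else 0) else 0)"
      by (rule sum.cong[OF refl])
    also have "\<dots> = (if b \<in> ?O then ?c * ?c else 0)"
      using Of fin by (simp add: faces_def)
    also have "\<dots> = (if b \<in> ?O then 1 / of_nat (card ?O) else 0)"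
      by (simp only: of_real_inverse_sqrt_squared)
    finally show ?thesis using True by (simp add: mmult_def class_proj_def)
  qed (auto simp: mmult_def class_proj_def)
qed

lemma mmult_Nhat_transpose:
  assumes "finite V"
  shows "mmult (arcs V E) V (arcs V E) (Nhat V E) (mtrans (Nhat V E))
         = class_proj (arcs V E) (same_tail (arcs V E))"
proof (intro ext)
  let ?A = "arcs V E"
  fix a b
  show "mmult ?A V ?A (Nhat V E) (mtrans (Nhat V E)) a b = class_proj ?A (same_tail ?A) a b"
  proof (cases "a \<in> ?A \<and> b \<in> ?A")
    case True
    let ?c = "complex_of_real (1 / sqrt (real (card (same_tail ?A a))))"
    have "fst a \<in> V" using True by (auto simp: arcs_def)
    have "(\<Sum>u\<in>V. Nhat V E a u * mtrans (Nhat V E) u b)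
        = (\<Sum>u\<in>V. if u = fst a then (if fst b = fst a then ?c * ?c else 0) else 0)"
      using True by (intro sum.cong refl) (auto simp: Nhat_def mtrans_def same_tail_def)
    also have "\<dots> = (if fst b = fst a then ?c * ?c else 0)"
      using \<open>fst a \<in> V\<close> assms by simp
    also have "\<dots> = (if fst b = fst a then 1 / of_nat (card (same_tail ?A a)) else 0)"
      by (simp only: of_real_inverse_sqrt_squared)
    finally show ?thesis using True by (simp add: mmult_def class_proj_def same_tail_def)
  qed (auto simp: mmult_def class_proj_def)
qed

lemma finite_arcs: "finite V \<Longrightarrow> finite (arcs V E)"
  by (rule finite_subset[of _ "V \<times> V"]) (auto simp: arcs_def)

lemma transition_matrix_eq_reflections:
  assumes "finite V" "bij_betw \<sigma> (arcs V E) (arcs V E)"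
  shows "transition_matrix V E \<sigma> = mmult (arcs V E) (arcs V E) (arcs V E)
    (reflection (arcs V E) (class_proj (arcs V E) (facial_orbit \<sigma>)))
    (reflection (arcs V E) (class_proj (arcs V E) (same_tail (arcs V E))))"
  by (simp only: transition_matrix_def Let_def reflection_def
      mmult_Mhat_transpose[OF finite_arcs[OF assms(1)] assms(2)] mmult_Nhat_transpose[OF assms(1)])

lemma unitary_transition_matrix_square:
  assumes "finite V" "bij_betw \<sigma> (arcs V E) (arcs V E)"
  defines "U \<equiv> transition_matrix V E \<sigma>"
  shows "\<exists>W'. unitary (arcs V E) (mmult (arcs V E) (arcs V E) (arcs V E) U U) W'"
proof -
  let ?A = "arcs V E"
  have fA: "finite ?A" by (rule finite_arcs[OF assms(1)])
  have "unitary ?A U (mmult ?A ?A ?A (reflection ?A (class_proj ?A (same_tail ?A)))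
      (reflection ?A (class_proj ?A (facial_orbit \<sigma>))))"
    unfolding U_def transition_matrix_eq_reflections[OF assms(1,2)]
    by (intro unitary_mmult unitary_reflection_class_proj is_class_map_facial_orbit
        is_class_map_same_tail fA assms(2))
  then show ?thesis using unitary_mmult by blast
qed

section \<open>Coverings of arc sets\<close>

locale cover =
  fixes AX :: "'x set" and AY :: "'y set" and p :: "'y \<Rightarrow> 'x" and r :: nat
  assumes finite_base: "finite AX" and finite_total: "finite AY"
    and maps_to_base: "\<And>b. b \<in> AY \<Longrightarrow> p b \<in> AX"
    and card_fiber: "\<And>a. a \<in> AX \<Longrightarrow> card {b\<in>AY. p b = a} = r"
    and sheets_pos: "r > 0"
begin

definition L :: "'y \<Rightarrow> 'x \<Rightarrow> complex" where
  "L = norm_char_matrix AY AX (\<lambda>a. {b\<in>AY. p b = a})"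

abbreviation intertwines :: "('y \<Rightarrow> 'y \<Rightarrow> complex) \<Rightarrow> ('x \<Rightarrow> 'x \<Rightarrow> complex) \<Rightarrow> bool" where
  "intertwines CY CX \<equiv> mmult AY AY AX CY L = mmult AY AX AX L CX"

abbreviation scale :: complex where
  "scale \<equiv> complex_of_real (1 / sqrt (real r))"

lemma L_eq: "L b a = (if b \<in> AY \<and> a \<in> AX \<and> p b = a then scale else 0)"
  by (auto simp: L_def norm_char_matrix_def card_fiber)

lemma mmult_transpose_L_L: "mat_eq_on AX AX (mmult AX AY AX (mtrans L) L) (idm AX)"
proof (unfold mat_eq_on_def, intro ballI)
  fix a a' assume aa: "a \<in> AX" "a' \<in> AX"
  have "(\<Sum>b\<in>AY. L b a * L b a') = (\<Sum>b\<in>AY. if p b = a then (if a = a' then scale * scale else 0) else 0)"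
    using aa by (intro sum.cong refl) (auto simp: L_eq)
  also have "\<dots> = (\<Sum>b\<in>{b\<in>AY. p b = a}. if a = a' then scale * scale else 0)"
    by (simp only: sum.inter_filter[OF finite_total])
  also have "\<dots> = of_nat r * (if a = a' then scale * scale else 0)"
    by (simp only: sum_constant card_fiber[OF aa(1)])
  also have "\<dots> = idm AX a a'"
    using aa sheets_pos of_real_inverse_sqrt_squared[of r] by (simp add: idm_def)
  finally show "mmult AX AY AX (mtrans L) L a a' = idm AX a a'"
    using aa by (simp add: mmult_def mtrans_def)
qed

lemma intertwines_of_fiber_sums:
  assumes "\<And>b a. b \<in> AY \<Longrightarrow> a \<in> AX \<Longrightarrow> (\<Sum>b'\<in>{b'\<in>AY. p b' = a}. CY b b') = CX (p b) a"
  shows "intertwines CY CX"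
proof (intro ext)
  fix b a
  show "mmult AY AY AX CY L b a = mmult AY AX AX L CX b a"
  proof (cases "b \<in> AY \<and> a \<in> AX")
    case True
    have "(\<Sum>b'\<in>AY. CY b b' * L b' a) = (\<Sum>b'\<in>AY. if p b' = a then scale * CY b b' else 0)"
      using True by (intro sum.cong refl) (auto simp: L_eq)
    also have "\<dots> = scale * (\<Sum>b'\<in>{b'\<in>AY. p b' = a}. CY b b')"
      by (simp add: sum.inter_filter[OF finite_total] sum_distrib_left) (intro sum.cong refl; simp)
    also have "\<dots> = scale * CX (p b) a"
      using assms True by simp
    also have "\<dots> = (\<Sum>a'\<in>AX. if p b = a' then scale * CX a' a else 0)"
      using finite_base maps_to_base True by simp
    also have "\<dots> = (\<Sum>a'\<in>AX. L b a' * CX a' a)"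
      using True by (intro sum.cong refl) (auto simp: L_eq)
    finally show ?thesis using True by (simp add: mmult_def)
  qed (auto simp: mmult_def)
qed

lemma intertwines_reflection:
  assumes "intertwines CY CX"
  shows "intertwines (reflection AY CY) (reflection AX CX)"
proof (intro ext)
  fix b a
  show "mmult AY AY AX (reflection AY CY) L b a = mmult AY AX AX L (reflection AX CX) b a"
  proof (cases "b \<in> AY \<and> a \<in> AX")
    case True
    have e: "(\<Sum>b'\<in>AY. CY b b' * L b' a) = (\<Sum>a'\<in>AX. L b a' * CX a' a)"
      using fun_cong[OF fun_cong[OF assms, of b], of a] True by (simp add: mmult_def)
    have "(\<Sum>b'\<in>AY. (2 * CY b b' - idm AY b b') * L b' a)
        = 2 * (\<Sum>b'\<in>AY. CY b b' * L b' a) - (\<Sum>b'\<in>AY. idm AY b b' * L b' a)"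
      by (simp add: algebra_simps sum_subtractf sum_distrib_left)
    moreover have "(\<Sum>a'\<in>AX. L b a' * (2 * CX a' a - idm AX a' a))
        = 2 * (\<Sum>a'\<in>AX. L b a' * CX a' a) - (\<Sum>a'\<in>AX. L b a' * idm AX a' a)"
      by (simp add: algebra_simps sum_subtractf sum_distrib_left)
    ultimately show ?thesis
      using True e finite_base finite_total
      by (simp add: mmult_def reflection_def sum_idm_left sum_idm_right)
  qed (auto simp: mmult_def)
qed

lemma intertwines_mmult:
  assumes "intertwines BY BX" "intertwines CY CX"
  shows "intertwines (mmult AY AY AY BY CY) (mmult AX AX AX BX CX)"
proof -
  have "mmult AY AY AX (mmult AY AY AY BY CY) L = mmult AY AY AX BY (mmult AY AX AX L CX)"
    by (simp only: mmult_assoc assms(2))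
  also have "\<dots> = mmult AY AX AX (mmult AY AY AX BY L) CX" by (rule mmult_assoc[symmetric])
  also have "\<dots> = mmult AY AX AX L (mmult AX AX AX BX CX)" by (simp only: assms(1) mmult_assoc)
  finally show ?thesis .
qed

lemma intertwines_lincomb:
  assumes "\<And>a. a \<in> K \<Longrightarrow> intertwines (FY a) (FX a)"
  shows "intertwines (\<lambda>i j. \<Sum>a\<in>K. c a * FY a i j) (\<lambda>i j. \<Sum>a\<in>K. c a * FX a i j)"
proof (intro ext)
  fix b a
  show "mmult AY AY AX (\<lambda>i j. \<Sum>a\<in>K. c a * FY a i j) L b a
    = mmult AY AX AX L (\<lambda>i j. \<Sum>a\<in>K. c a * FX a i j) b a"
    using assms
    by (cases "b \<in> AY \<and> a \<in> AX")
      (simp_all add: mmult_sum_left mmult_sum_right mmult_scale_left mmult_scale_right mmult_outside)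
qed

lemma poly_act_intertwines:
  assumes "intertwines WY WX"
  shows "poly_act AY WY q (mvec AY AX L v) = mvec AY AX L (poly_act AX WX q v)"
proof (induction q arbitrary: v)
  case 0 then show ?case by simp
next
  case (pCons c q)
  have W: "mvec AY AY WY (mvec AY AX L x) = mvec AY AX L (mvec AX AX WX x)" for x
    by (simp add: mvec_mmult[symmetric] assms)
  show ?case
    by (simp add: poly_act_pCons pCons.IH W mvec_add mvec_scale)
qed

lemma mvec_transpose_L_L: "vanishes_outside AX x \<Longrightarrow> mvec AX AY (mtrans L) (mvec AY AX L x) = x"
  by (rule mvec_left_inverse[OF finite_base mmult_transpose_L_L])

lemma annihilates_of_intertwines:
  assumes "intertwines WY WX" "annihilates AY WY q"
  shows "annihilates AX WX q"
  unfolding annihilates_def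
proof (intro allI impI)
  fix v assume v: "vanishes_outside AX v"
  let ?w = "poly_act AX WX q v"
  have "?w = mvec AX AY (mtrans L) (mvec AY AX L ?w)"
    by (rule mvec_transpose_L_L[OF vanishes_outside_poly_act[OF v], symmetric])
  also have "mvec AY AX L ?w = poly_act AY WY q (mvec AY AX L v)"
    by (rule poly_act_intertwines[OF assms(1), symmetric])
  also have "\<dots> = (\<lambda>i. 0)" using assms(2) by (simp add: annihilates_def)
  finally show "?w = (\<lambda>i. 0)" by simp
qed

lemma L_column: "a \<in> AX \<Longrightarrow> (\<lambda>b. L b a) = mvec AY AX L (unit_vec a)"
  by (auto simp: mvec_unit_vec finite_base L_eq)

lemma intertwines_poly_mat:
  assumes "intertwines WY WX"
  shows "intertwines (poly_mat AY WY q) (poly_mat AX WX q)"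
proof (intro ext)
  fix b a
  show "mmult AY AY AX (poly_mat AY WY q) L b a = mmult AY AX AX L (poly_mat AX WX q) b a"
  proof (cases "a \<in> AX")
    case True
    have "mmult AY AY AX (poly_mat AY WY q) L b a = mvec AY AY (poly_mat AY WY q) (\<lambda>b. L b a) b"
      using True by (rule mmult_eq_mvec_column)
    also have "\<dots> = poly_act AY WY q (mvec AY AX L (unit_vec a)) b"
      by (simp add: L_column[OF True] mvec_poly_mat finite_total)
    also have "\<dots> = mvec AY AX L (poly_act AX WX q (unit_vec a)) b"
      by (simp only: poly_act_intertwines[OF assms])
    also have "\<dots> = mvec AY AX L (\<lambda>a'. poly_mat AX WX q a' a) b"
      using True by (intro fun_cong[OF mvec_cong_vec]) (simp add: poly_mat_def)
    also have "\<dots> = mmult AY AX AX L (poly_mat AX WX q) b a"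
      using True by (rule mmult_eq_mvec_column[symmetric])
    finally show ?thesis .
  qed (simp add: mmult_outside)
qed

text \<open>Every polynomial annihilating W_Y annihilates W_X, so both principal Hamiltonians are
  the same linear combination of Lagrange basis polynomials at the same nodes.\<close>

lemma principal_hamiltonian_intertwines:
  assumes "unitary AY WY WY'" "unitary AX WX WX'" "intertwines WY WX"
  shows "intertwines (principal_hamiltonian AY WY) (principal_hamiltonian AX WX)"
proof -
  obtain Z where Z: "finite Z" "annihilates AY WY (\<Prod>z\<in>Z. [:-z,1:])"
    using unitary.exists_annihilating_product_linear_factors[OF assms(1)] by blast
  have "unitary_annihilated AY WY WY' Z"
    using assms(1) Z by (simp add: unitary_annihilated_def unitary_annihilated_axioms_def)
  moreover have "unitary_annihilated AX WX WX' Z"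
    using assms(2) Z annihilates_of_intertwines[OF assms(3)]
    by (simp add: unitary_annihilated_def unitary_annihilated_axioms_def)
  ultimately show ?thesis
    by (simp only: unitary_annihilated.principal_hamiltonian_lagrange)
      (intro intertwines_lincomb intertwines_poly_mat assms(3))
qed

lemma compress_intertwined:
  assumes "intertwines CY CX" "\<And>i j. i \<notin> AX \<or> j \<notin> AX \<Longrightarrow> CX i j = 0"
  shows "mmult AX AY AX (mtrans L) (mmult AY AY AX CY L) = CX"
proof -
  have "mmult AX AY AX (mtrans L) (mmult AY AY AX CY L) = mmult AX AX AX (mmult AX AY AX (mtrans L) L) CX"
    by (simp only: assms(1) mmult_assoc)
  also have "\<dots> = mmult AX AX AX (idm AX) CX"
    by (rule mmult_cong[OF mmult_transpose_L_L]) (simp add: mat_eq_on_def)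
  also have "\<dots> = CX" by (rule mmult_idm_left_eq[OF finite_base assms(2)])
  finally show ?thesis .
qed

end

section \<open>Voltage graphs cover their base graph\<close>

locale voltage_cover =
  fixes V :: "'v set" and E :: "'v \<Rightarrow> 'v \<Rightarrow> bool" and \<sigma> :: "'v \<times> 'v \<Rightarrow> 'v \<times> 'v"
    and G :: "'g monoid" and \<phi> :: "'v \<times> 'v \<Rightarrow> 'g"
  assumes finite_vertices: "finite V" and embedding: "orientable_embedding V E \<sigma>"
    and group: "group G" and finite_group: "finite (carrier G)"
    and voltage: "voltage_assignment G V E \<phi>"
begin

abbreviation "AX \<equiv> arcs V E"
abbreviation "VY \<equiv> voltage_vertices G V"
abbreviation "EY \<equiv> voltage_edges G E \<phi>"
abbreviation "AY \<equiv> arcs VY EY"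
abbreviation "\<sigma>Y \<equiv> voltage_embedding G \<phi> \<sigma>"

definition lift :: "'g \<Rightarrow> 'v \<times> 'v \<Rightarrow> ('v \<times> 'g) \<times> ('v \<times> 'g)" where
  "lift g a = ((fst a, g), (snd a, g \<otimes>\<^bsub>G\<^esub> \<phi> a))"

lemma voltage_closed: "g \<in> carrier G \<Longrightarrow> a \<in> AX \<Longrightarrow> g \<otimes>\<^bsub>G\<^esub> \<phi> a \<in> carrier G"
  using voltage group by (simp add: voltage_assignment_def group.is_monoid monoid.m_closed)

lemma lift_in_arcs: "g \<in> carrier G \<Longrightarrow> a \<in> AX \<Longrightarrow> lift g a \<in> AY"
  using voltage_closed[of g a]
  by (cases a) (simp add: lift_def arcs_def voltage_vertices_def voltage_edges_def)

lemma arc_eq_lift: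
  assumes "b \<in> AY"
  shows "snd (fst b) \<in> carrier G \<and> cover_arc b \<in> AX \<and> b = lift (snd (fst b)) (cover_arc b)"
proof -
  obtain u g v h where "b = ((u, g), (v, h))" by (metis prod.collapse)
  then show ?thesis
    using assms by (auto simp: cover_arc_def lift_def arcs_def voltage_vertices_def voltage_edges_def)
qed

lemma cover_arc_lift [simp]: "cover_arc (lift g a) = a"
  by (simp add: cover_arc_def lift_def)

lemma lift_inject: "lift g a = lift g' a' \<Longrightarrow> g = g' \<and> a = a'"
  by (simp add: lift_def prod_eq_iff)

lemma finite_arcs_voltage: "finite AY"
proof (rule finite_subset)
  show "AY \<subseteq> (\<lambda>(g, a). lift g a) ` (carrier G \<times> AX)"
  proof
    fix b assume "b \<in> AY"
    then have "(snd (fst b), cover_arc b) \<in> carrier G \<times> AX"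
      "b = (\<lambda>(g, a). lift g a) (snd (fst b), cover_arc b)" using arc_eq_lift[of b] by auto
    then show "b \<in> (\<lambda>(g, a). lift g a) ` (carrier G \<times> AX)" by (rule rev_image_eqI)
  qed
  show "finite ((\<lambda>(g, a). lift g a) ` (carrier G \<times> AX))"
    using finite_group finite_arcs[OF finite_vertices] by simp
qed

lemma fiber_eq_lifts:
  assumes "a \<in> AX"
  shows "{b\<in>AY. cover_arc b = a} = (\<lambda>g. lift g a) ` carrier G"
proof (intro equalityI subsetI)
  fix b assume "b \<in> {b\<in>AY. cover_arc b = a}"
  then have "b \<in> AY" "cover_arc b = a" by auto
  then have "snd (fst b) \<in> carrier G" "b = lift (snd (fst b)) a" using arc_eq_lift[of b] by auto
  then show "b \<in> (\<lambda>g. lift g a) ` carrier G" by (rule rev_image_eqI)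
next
  fix b assume "b \<in> (\<lambda>g. lift g a) ` carrier G"
  then obtain g where "g \<in> carrier G" "b = lift g a" by blast
  then show "b \<in> {b\<in>AY. cover_arc b = a}" using lift_in_arcs[OF _ assms] by simp
qed

lemma cover_arc_cover: "cover AX AY cover_arc (card (carrier G))"
proof
  show "finite AX" by (rule finite_arcs[OF finite_vertices])
  show "finite AY" by (rule finite_arcs_voltage)
  show "\<And>b. b \<in> AY \<Longrightarrow> cover_arc b \<in> AX" using arc_eq_lift by blast
  show "card {b\<in>AY. cover_arc b = a} = card (carrier G)" if "a \<in> AX" for a
    unfolding fiber_eq_lifts[OF that] by (rule card_image) (auto intro!: inj_onI dest: lift_inject)
  show "0 < card (carrier G)"
    using finite_group group.is_monoid[OF group] monoid.one_closed by (auto simp: card_gt_0_iff)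
qed

sublocale cover AX AY cover_arc "card (carrier G)"
  by (rule cover_arc_cover)

lemma bij_embedding: "bij_betw \<sigma> AX AX"
  using embedding by (simp add: orientable_embedding_def)

lemma voltage_embedding_lift: "a \<in> AX \<Longrightarrow> \<sigma>Y (lift g a) = lift (g \<otimes>\<^bsub>G\<^esub> \<phi> a) (\<sigma> a)"
  using embedding by (cases a; cases "\<sigma> a")
    (auto simp: voltage_embedding_def lift_def orientable_embedding_def)

lemma bij_voltage_embedding: "bij_betw \<sigma>Y AY AY"
proof -
  have maps: "\<sigma>Y ` AY \<subseteq> AY"
  proof
    fix x assume "x \<in> \<sigma>Y ` AY"
    then obtain b where b: "b \<in> AY" "x = \<sigma>Y b" by blast
    then show "x \<in> AY"
      using arc_eq_lift[OF b(1)] voltage_embedding_lift lift_in_arcs voltage_closed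
        bij_betw_apply[OF bij_embedding] by metis
  qed
  have "inj_on \<sigma>Y AY"
  proof (rule inj_onI)
    fix b b' assume b: "b \<in> AY" and b': "b' \<in> AY" and eq: "\<sigma>Y b = \<sigma>Y b'"
    let ?g = "snd (fst b)" and ?a = "cover_arc b" and ?g' = "snd (fst b')" and ?a' = "cover_arc b'"
    have h: "?g \<in> carrier G" "?a \<in> AX" "b = lift ?g ?a" using arc_eq_lift[OF b] by blast+
    have h': "?g' \<in> carrier G" "?a' \<in> AX" "b' = lift ?g' ?a'" using arc_eq_lift[OF b'] by blast+
    have "lift (?g \<otimes>\<^bsub>G\<^esub> \<phi> ?a) (\<sigma> ?a) = lift (?g' \<otimes>\<^bsub>G\<^esub> \<phi> ?a') (\<sigma> ?a')"
      using eq h h' voltage_embedding_lift by metis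
    then have e: "?g \<otimes>\<^bsub>G\<^esub> \<phi> ?a = ?g' \<otimes>\<^bsub>G\<^esub> \<phi> ?a'" "\<sigma> ?a = \<sigma> ?a'" using lift_inject by blast+
    have aa: "?a = ?a'" using bij_betw_imp_inj_on[OF bij_embedding] e(2) h(2) h'(2) by (rule inj_onD)
    have "\<phi> ?a \<in> carrier G" using voltage h(2) by (simp add: voltage_assignment_def)
    then have "?g = ?g'" using e(1) aa group.right_cancel[OF group _ h(1) h'(1)] by simp
    then show "b = b'" using h(3) h'(3) aa by simp
  qed
  then show ?thesis
    using maps endo_inj_surj[OF finite_arcs_voltage maps] by (simp add: bij_betw_def)
qed

lemma cover_arc_voltage_embedding:
  assumes "b \<in> AY"
  shows "cover_arc (\<sigma>Y b) = \<sigma> (cover_arc b)"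
proof -
  have b: "b = lift (snd (fst b)) (cover_arc b)" "cover_arc b \<in> AX" using arc_eq_lift[OF assms] by blast+
  have "\<sigma>Y b = \<sigma>Y (lift (snd (fst b)) (cover_arc b))" by (rule arg_cong[OF b(1)])
  also have "\<dots> = lift (snd (fst b) \<otimes>\<^bsub>G\<^esub> \<phi> (cover_arc b)) (\<sigma> (cover_arc b))"
    by (rule voltage_embedding_lift[OF b(2)])
  finally show ?thesis by simp
qed

lemma cover_arc_funpow: "b \<in> AY \<Longrightarrow> cover_arc ((\<sigma>Y ^^ n) b) = (\<sigma> ^^ n) (cover_arc b)"
proof (induction n)
  case (Suc n)
  have "(\<sigma>Y ^^ n) b \<in> AY"
    using funpow_in[of \<sigma>Y AY b n] Suc.prems bij_voltage_embedding by (simp add: bij_betw_def)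
  then show ?case using Suc by (simp add: cover_arc_voltage_embedding)
qed simp

text \<open>Averaging over a common period N of both facial permutations turns the face projections
  into counts of visits, which the covering map transports along the lifted walk.\<close>

lemma face_fiber_sum:
  assumes b: "b \<in> AY" and a: "a \<in> AX"
  shows "(\<Sum>b'\<in>{b'\<in>AY. cover_arc b' = a}. class_proj AY (facial_orbit \<sigma>Y) b b')
    = class_proj AX (facial_orbit \<sigma>) (cover_arc b) a"
proof -
  obtain NX where NX: "NX > 0" "\<And>a. a \<in> AX \<Longrightarrow> (\<sigma> ^^ NX) a = a"
    using funpow_common_period[OF finite_arcs[OF finite_vertices] bij_embedding] by blast
  obtain NY where NY: "NY > 0" "\<And>b. b \<in> AY \<Longrightarrow> (\<sigma>Y ^^ NY) b = b"
    using funpow_common_period[OF finite_arcs_voltage bij_voltage_embedding] by blast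
  define N where "N = NY * NX"
  have N: "N > 0" "\<And>a. a \<in> AX \<Longrightarrow> (\<sigma> ^^ N) a = a" "\<And>b. b \<in> AY \<Longrightarrow> (\<sigma>Y ^^ N) b = b"
    using NX NY funpow_mult_period[where f = \<sigma> and p = NX and k = NY]
      funpow_mult_period[where f = \<sigma>Y and p = NY and k = NX]
    by (auto simp: N_def mult.commute[of NY])
  have cb: "cover_arc b \<in> AX" using arc_eq_lift[OF b] by blast
  have in_AY: "(\<sigma>Y ^^ n) b \<in> AY" for n
    using funpow_in[of \<sigma>Y AY b n] b bij_voltage_embedding by (simp add: bij_betw_def)
  have "(\<Sum>b'\<in>{b'\<in>AY. cover_arc b' = a}. class_proj AY (facial_orbit \<sigma>Y) b b')
      = (\<Sum>b'\<in>{b'\<in>AY. cover_arc b' = a}. of_nat (card {n\<in>{..<N}. (\<sigma>Y ^^ n) b = b'}) / of_nat N)"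
    using class_proj_facial_orbit_average[OF finite_arcs_voltage bij_voltage_embedding N(1) N(3)[OF b] b]
    by simp
  also have "\<dots> = of_nat (\<Sum>b'\<in>{b'\<in>AY. cover_arc b' = a}. card {n\<in>{..<N}. (\<sigma>Y ^^ n) b = b'}) / of_nat N"
    by (simp add: sum_divide_distrib)
  also have "\<dots> = of_nat (card {n\<in>{..<N}. (\<sigma> ^^ n) (cover_arc b) = a}) / of_nat N"
    using sum_card_fiber[of "{..<N}" AY "\<lambda>n. (\<sigma>Y ^^ n) b" cover_arc a] finite_arcs_voltage in_AY
    by (simp add: cover_arc_funpow[OF b])
  also have "\<dots> = class_proj AX (facial_orbit \<sigma>) (cover_arc b) a"
    using class_proj_facial_orbit_average[OF finite_arcs[OF finite_vertices] bij_embedding N(1)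
        N(2)[OF cb] cb a] by simp
  finally show ?thesis .
qed

lemma same_tail_voltage:
  assumes "b \<in> AY"
  shows "same_tail AY b = (\<lambda>c. lift (snd (fst b)) c) ` same_tail AX (cover_arc b)"
proof (intro equalityI subsetI)
  fix b' assume "b' \<in> same_tail AY b"
  then have "b' \<in> AY" "fst b' = fst b" by (auto simp: same_tail_def)
  then show "b' \<in> (\<lambda>c. lift (snd (fst b)) c) ` same_tail AX (cover_arc b)"
    using arc_eq_lift[of b'] by (auto simp: same_tail_def cover_arc_def intro!: image_eqI)
next
  fix b' assume "b' \<in> (\<lambda>c. lift (snd (fst b)) c) ` same_tail AX (cover_arc b)"
  then obtain c where c: "c \<in> AX" "fst c = fst (fst b)" "b' = lift (snd (fst b)) c"
    by (auto simp: same_tail_def cover_arc_def)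
  have "b' \<in> AY" using c lift_in_arcs arc_eq_lift[OF assms] by simp
  moreover have "fst b' = fst b" using c by (simp add: lift_def)
  ultimately show "b' \<in> same_tail AY b" by (simp add: same_tail_def)
qed

lemma tail_fiber_sum:
  assumes b: "b \<in> AY" and a: "a \<in> AX"
  shows "(\<Sum>b'\<in>{b'\<in>AY. cover_arc b' = a}. class_proj AY (same_tail AY) b b')
    = class_proj AX (same_tail AX) (cover_arc b) a"
proof -
  let ?g = "snd (fst b)" and ?T = "same_tail AX (cover_arc b)"
  have inj: "inj_on (\<lambda>c. lift ?g c) ?T" by (auto intro!: inj_onI dest: lift_inject)
  have card_eq: "card (same_tail AY b) = card ?T"
    unfolding same_tail_voltage[OF b] by (rule card_image[OF inj])
  have "{b'\<in>AY. cover_arc b' = a} \<inter> same_tail AY b = (if a \<in> ?T then {lift ?g a} else {})"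
    unfolding same_tail_voltage[OF b] using lift_in_arcs[OF _ a] arc_eq_lift[OF b] by auto
  moreover have "(\<Sum>b'\<in>{b'\<in>AY. cover_arc b' = a}. class_proj AY (same_tail AY) b b')
      = (\<Sum>b'\<in>{b'\<in>AY. cover_arc b' = a} \<inter> same_tail AY b. 1 / of_nat (card (same_tail AY b)))"
  proof -
    have "(\<Sum>b'\<in>{b'\<in>AY. cover_arc b' = a}. class_proj AY (same_tail AY) b b')
        = (\<Sum>b'\<in>{b'\<in>AY. cover_arc b' = a}.
            if b' \<in> same_tail AY b then 1 / of_nat (card (same_tail AY b)) else 0)"
      using b by (intro sum.cong refl) (auto simp: class_proj_def)
    also have "\<dots> = (\<Sum>b'\<in>{b'\<in>AY. cover_arc b' = a} \<inter> same_tail AY b.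
        1 / of_nat (card (same_tail AY b)))"
      by (rule sum.inter_restrict[symmetric]) (simp add: finite_arcs_voltage)
    finally show ?thesis .
  qed
  ultimately show ?thesis
    using card_eq a arc_eq_lift[OF b] by (simp add: class_proj_def same_tail_def)
qed

lemma transition_matrix_intertwines:
  "intertwines (transition_matrix VY EY \<sigma>Y) (transition_matrix V E \<sigma>)"
proof -
  have "finite VY" using finite_vertices finite_group by (simp add: voltage_vertices_def)
  then show ?thesis
    unfolding transition_matrix_eq_reflections[OF finite_vertices bij_embedding]
      transition_matrix_eq_reflections[OF \<open>finite VY\<close> bij_voltage_embedding]
    by (intro intertwines_mmult intertwines_reflection intertwines_of_fiber_sums
        face_fiber_sum tail_fiber_sum)
qed

end

theorem theorem6p2:
  fixes V :: "'v set" and E :: "'v \<Rightarrow> 'v \<Rightarrow> bool"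
    and \<sigma> :: "'v \<times> 'v \<Rightarrow> 'v \<times> 'v"
    and G :: "'g monoid" and \<phi> :: "'v \<times> 'v \<Rightarrow> 'g"
  assumes "simple_graph V E"
    and "connected_graph V E"
    and "circular_embedding V E \<sigma>"
    and "group G" and "finite (carrier G)"
    and "voltage_assignment G V E \<phi>"
    and "connected_graph (voltage_vertices G V) (voltage_edges G E \<phi>)"
  shows "let VY = voltage_vertices G V; EY = voltage_edges G E \<phi>;
             \<sigma>Y = voltage_embedding G \<phi> \<sigma>;
             AX = arcs V E; AY = arcs VY EY;
             L = norm_char_matrix AY AX (\<lambda>a. {b \<in> AY. cover_arc b = a})
         in transition_matrix V E \<sigma> =
              mmult AX AY AX (mtrans L) (mmult AY AY AX (transition_matrix VY EY \<sigma>Y) L)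
          \<and> H_digraph V E \<sigma> = quotient_digraph AY AX (H_digraph VY EY \<sigma>Y) L"
proof -
  interpret voltage_cover V E \<sigma> G \<phi>
    using assms by (simp add: voltage_cover_def simple_graph_def circular_embedding_def)
  have "finite VY" using finite_vertices finite_group by (simp add: voltage_vertices_def)
  obtain WX' where WX: "unitary AX (mmult AX AX AX (transition_matrix V E \<sigma>) (transition_matrix V E \<sigma>)) WX'"
    using unitary_transition_matrix_square[OF finite_vertices bij_embedding] by blast
  obtain WY' where WY: "unitary AY (mmult AY AY AY (transition_matrix VY EY \<sigma>Y) (transition_matrix VY EY \<sigma>Y)) WY'"
    using unitary_transition_matrix_square[OF \<open>finite VY\<close> bij_voltage_embedding] by blast
  have "intertwines (H_digraph VY EY \<sigma>Y) (H_digraph V E \<sigma>)"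
    unfolding H_digraph_def Let_def
    by (intro principal_hamiltonian_intertwines[OF WY WX] intertwines_mmult transition_matrix_intertwines)
  moreover have "H_digraph V E \<sigma> i j = 0" if "i \<notin> AX \<or> j \<notin> AX" for i j
    using unitary.principal_hamiltonian_outside[OF WX that] by (simp add: H_digraph_def Let_def)
  ultimately have "H_digraph V E \<sigma> = quotient_digraph AY AX (H_digraph VY EY \<sigma>Y) L"
    unfolding quotient_digraph_def by (rule compress_intertwined[symmetric])
  moreover have "transition_matrix V E \<sigma>
      = mmult AX AY AX (mtrans L) (mmult AY AY AX (transition_matrix VY EY \<sigma>Y) L)"
    by (intro compress_intertwined[symmetric] transition_matrix_intertwines)
      (auto simp: transition_matrix_def Let_def mmult_outside)
  ultimately show ?thesis by (simp add: L_def)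
qed

end
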